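(* Let $\rho_{ABE}=\sum_ap_A(a)|a\rangle\langle a|\otimes\rho^{|a}_{BE}$ be a state with $A$ and $B$ classical, and let $\rho_E=\mathrm{tr}_{AB}[\rho_{ABE}]=\sum_ap_A(a)\rho^{|a}_E$ with $\rho^{|a}_E=\mathrm{tr}_B[\rho^{|a}_{BE}]$. Then for all $a$ with $p_A(a)>0$ and all $\alpha\in[1,\infty]$, $$2^{(\alpha-1)D_\alpha(\rho^{|a}_{BE}\|I_B\otimes\rho_E)}\le p_A(a)^{1-\alpha}.$$
   Context: $\log$ base 2. For $\alpha\in(1,\infty)$, $D_\alpha(\rho\|\sigma)=\frac{1}{\alpha-1}\log\big(\mathrm{tr}[(\sigma^{\frac{1-\alpha}{2\alpha}}\rho\sigma^{\frac{1-\alpha}{2\alpha}})^\alpha]/\mathrm{tr}\rho\big)$ if $\mathrm{supp}\rho\subseteq\mathrm{supp}\sigma$, else $+\infty$; $D_1$ is the Umegaki relative entropy $\mathrm{tr}[\rho(\log\rho-\log\sigma)]$ and $D_\infty(\rho\|\sigma)=\inf\{\lambda:\rho\le2^\lambda\sigma\}$ is the max-divergence. *)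

theory Defs
  imports "Jordan_Normal_Form.Schur_Decomposition" "HOL-Library.Extended_Real"
begin

definition mat_trace :: "complex mat \<Rightarrow> complex" where
  "mat_trace A = (\<Sum>i<dim_row A. A $$ (i,i))"

definition hermitian_mat :: "nat \<Rightarrow> complex mat \<Rightarrow> bool" where
  "hermitian_mat n A \<longleftrightarrow> A \<in> carrier_mat n n \<and> mat_adjoint A = A"

definition unitary_mat :: "nat \<Rightarrow> complex mat \<Rightarrow> bool" where
  "unitary_mat n U \<longleftrightarrow> U \<in> carrier_mat n n \<and> mat_adjoint U * U = 1\<^sub>m n"

definition psd_mat :: "nat \<Rightarrow> complex mat \<Rightarrow> bool" where
  "psd_mat n A \<longleftrightarrow> hermitian_mat n A \<and>
     (\<forall>v \<in> carrier_vec n. Re (\<Sum>i<n. cnj (v $ i) * (A *\<^sub>v v) $ i) \<ge> 0)"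

definition density_mat :: "nat \<Rightarrow> complex mat \<Rightarrow> bool" where
  "density_mat n A \<longleftrightarrow> psd_mat n A \<and> mat_trace A = 1"

definition loewner_le :: "nat \<Rightarrow> complex mat \<Rightarrow> complex mat \<Rightarrow> bool" where
  "loewner_le n A B \<longleftrightarrow> A \<in> carrier_mat n n \<and> B \<in> carrier_mat n n \<and> psd_mat n (B - A)"

definition real_diag :: "nat \<Rightarrow> (nat \<Rightarrow> real) \<Rightarrow> complex mat" where
  "real_diag n d = mat n n (\<lambda>(i,j). if i = j then complex_of_real (d i) else 0)"

definition mat_fun :: "nat \<Rightarrow> (real \<Rightarrow> real) \<Rightarrow> complex mat \<Rightarrow> complex mat" where
  "mat_fun n f A = (SOME M. \<exists>U d. unitary_mat n U \<and> A = U * real_diag n d * mat_adjoint U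
      \<and> M = U * real_diag n (f \<circ> d) * mat_adjoint U)"

definition mat_range :: "nat \<Rightarrow> complex mat \<Rightarrow> complex vec set" where
  "mat_range n A = {A *\<^sub>v v | v. v \<in> carrier_vec n}"

text \<open>Sandwiched Renyi divergence, alpha > 1 (negative powers taken on the
  support; note 0 powr t = 0).\<close>
definition sandwiched_D :: "nat \<Rightarrow> real \<Rightarrow> complex mat \<Rightarrow> complex mat \<Rightarrow> ereal" where
  "sandwiched_D n \<alpha> \<rho> \<sigma> =
     (if mat_range n \<rho> \<subseteq> mat_range n \<sigma> then
        (let S = mat_fun n (\<lambda>x. x powr ((1 - \<alpha>) / (2 * \<alpha>))) \<sigma> in
         ereal (1 / (\<alpha> - 1) * log 2
            (Re (mat_trace (mat_fun n (\<lambda>x. x powr \<alpha>) (S * \<rho> * S))) / Re (mat_trace \<rho>))))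
      else \<infinity>)"

text \<open>Umegaki relative entropy (log base 2; log 2 0 = 0 in Isabelle, i.e. logs on supports)\<close>
definition umegaki_D :: "nat \<Rightarrow> complex mat \<Rightarrow> complex mat \<Rightarrow> ereal" where
  "umegaki_D n \<rho> \<sigma> =
     (if mat_range n \<rho> \<subseteq> mat_range n \<sigma> then
        ereal (Re (mat_trace (\<rho> * (mat_fun n (log 2) \<rho> - mat_fun n (log 2) \<sigma>))))
      else \<infinity>)"

definition renyi_D :: "nat \<Rightarrow> real \<Rightarrow> complex mat \<Rightarrow> complex mat \<Rightarrow> ereal" where
  "renyi_D n \<alpha> \<rho> \<sigma> = (if \<alpha> = 1 then umegaki_D n \<rho> \<sigma> else sandwiched_D n \<alpha> \<rho> \<sigma>)"

text \<open>max-divergence: inf {\<lambda>. \<rho> \<le> 2^\<lambda> \<sigma>} (inf of empty set = +\<infinity>)\<close>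
definition max_D :: "nat \<Rightarrow> complex mat \<Rightarrow> complex mat \<Rightarrow> ereal" where
  "max_D n \<rho> \<sigma> = Inf {ereal t | t. loewner_le n \<rho> (complex_of_real (2 powr t) \<cdot>\<^sub>m \<sigma>)}"

text \<open>Kronecker product, standard ordering (index of first factor is the major one)\<close>
definition kron :: "complex mat \<Rightarrow> complex mat \<Rightarrow> complex mat" where
  "kron A B = mat (dim_row A * dim_row B) (dim_col A * dim_col B)
     (\<lambda>(i,j). A $$ (i div dim_row B, j div dim_col B) * B $$ (i mod dim_row B, j mod dim_col B))"

text \<open>sum_b |b><b| \<otimes> \<omega>_b on B \<otimes> E (dim B = nB, dim E = nE)\<close>
definition cq_mat :: "nat \<Rightarrow> nat \<Rightarrow> (nat \<Rightarrow> complex mat) \<Rightarrow> complex mat" where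
  "cq_mat nB nE \<omega> = mat (nB * nE) (nB * nE)
     (\<lambda>(i,j). if i div nE = j div nE then \<omega> (i div nE) $$ (i mod nE, j mod nE) else 0)"

definition ptrace_B :: "nat \<Rightarrow> nat \<Rightarrow> complex mat \<Rightarrow> complex mat" where
  "ptrace_B nB nE M = mat nE nE (\<lambda>(i,j). \<Sum>b<nB. M $$ (b * nE + i, b * nE + j))"

end

(* Writing rho_BE^a = \<Sum>_b |b><b| (x) omega_ab, the marginal is
   rho_E = \<Sum>_a' p(a') \<Sum>_b' omega_a'b', so p(a) omega_ab \<le> rho_E for every b and hence
   rho_BE^a \<le> lam (I_B (x) rho_E) in the Loewner order, with lam = 1/p(a).  Everything follows
   from a domination rho \<le> lam sigma.  The max-divergence bound is immediate, and the support
   of rho lies in that of sigma.  For the sandwiched divergence let X = sigma^(-g) rho sigma^(-g)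
   with g = (alpha-1)/(2 alpha); then X \<le> lam sigma^(1/alpha) on the support of sigma.  Testing
   this on an eigenvector w of X with eigenvalue x gives x \<le> lam / <w, sigma^(-1/alpha) w>, and
   Jensen's inequality for the convex function t \<mapsto> t^(1-alpha) turns this into
   x^alpha \<le> lam^(alpha-1) x <w, sigma^((alpha-1)/alpha) w>.  Summing over the eigenvalues,
   Tr X^alpha \<le> lam^(alpha-1) Tr[X sigma^((alpha-1)/alpha)] \<le> lam^(alpha-1) Tr rho. *)

theory Submission
  imports Defs
begin

section \<open>Adjoints and unitary matrices\<close>

lemma index_mult_mat_sum:
  "A \<in> carrier_mat n k \<Longrightarrow> B \<in> carrier_mat k m \<Longrightarrow> i < n \<Longrightarrow> j < m \<Longrightarrow>
    (A * B) $$ (i,j) = (\<Sum>l<k. A $$ (i,l) * B $$ (l,j))"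
  by (auto simp: index_mult_mat scalar_prod_def atLeast0LessThan intro!: sum.cong)

lemma mat_adjoint_dim [simp]:
  "dim_row (mat_adjoint A) = dim_col A" "dim_col (mat_adjoint A) = dim_row A"
  by (auto simp: mat_adjoint_def)

lemma index_mat_adjoint [simp]:
  "i < dim_col A \<Longrightarrow> j < dim_row A \<Longrightarrow> mat_adjoint A $$ (i,j) = cnj (A $$ (j,i))"
  by (auto simp: mat_adjoint_def mat_of_rows_def)

lemma mat_adjoint_carrier [simp]: "A \<in> carrier_mat n m \<Longrightarrow> mat_adjoint A \<in> carrier_mat m n"
  by (metis mat_adjoint_dim carrier_matD carrier_matI)

lemma mat_adjoint_adjoint [simp]: "mat_adjoint (mat_adjoint A) = (A :: complex mat)"
  by (rule eq_matI) auto

lemma mat_adjoint_mult: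
  fixes A B :: "complex mat"
  assumes "A \<in> carrier_mat n k" "B \<in> carrier_mat k m"
  shows "mat_adjoint (A * B) = mat_adjoint B * mat_adjoint A"
proof (rule eq_matI)
  fix i j assume "i < dim_row (mat_adjoint B * mat_adjoint A)" "j < dim_col (mat_adjoint B * mat_adjoint A)"
  hence i: "i < m" and j: "j < n" using assms by auto
  have "mat_adjoint (A * B) $$ (i,j) = cnj (\<Sum>l<k. A $$ (j,l) * B $$ (l,i))"
    using assms i j index_mult_mat_sum[OF assms j i] by simp
  also have "\<dots> = (mat_adjoint B * mat_adjoint A) $$ (i,j)"
    using assms i j by (subst index_mult_mat_sum[of _ m k _ n]) (auto intro!: sum.cong)
  finally show "mat_adjoint (A * B) $$ (i,j) = (mat_adjoint B * mat_adjoint A) $$ (i,j)" .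
qed (use assms in auto)

lemma hermitian_cnj_index:
  assumes "A \<in> carrier_mat n n" "mat_adjoint A = A" "i < n" "j < n"
  shows "cnj (A $$ (j,i)) = A $$ (i,j)"
  using arg_cong[OF assms(2), of "\<lambda>B. B $$ (i,j)"] assms(1,3,4) by simp

lemma mat_adjoint_eqI:
  assumes "A \<in> carrier_mat n n" "\<And>i j. i < n \<Longrightarrow> j < n \<Longrightarrow> cnj (A $$ (j,i)) = A $$ (i,j)"
  shows "mat_adjoint A = A"
  using assms by (intro eq_matI) auto

lemma unitary_mat_carrier: "unitary_mat n U \<Longrightarrow> U \<in> carrier_mat n n"
  unfolding unitary_mat_def by auto

lemma unitary_mat_mult_adjoint: "unitary_mat n U \<Longrightarrow> U * mat_adjoint U = 1\<^sub>m n"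
  unfolding unitary_mat_def using mat_mult_left_right_inverse[of "mat_adjoint U" n U] by auto

lemma real_diag_carrier [simp]: "real_diag n d \<in> carrier_mat n n"
  by (simp add: real_diag_def)

lemma index_unitary_diag_adjoint:
  assumes "U \<in> carrier_mat n n" "i < n" "j < n"
  shows "(U * real_diag n d * mat_adjoint U) $$ (i,j) =
    (\<Sum>k<n. U $$ (i,k) * complex_of_real (d k) * cnj (U $$ (j,k)))"
proof -
  have "(U * real_diag n d) $$ (i,k) = U $$ (i,k) * complex_of_real (d k)" if "k < n" for k
  proof -
    have "(U * real_diag n d) $$ (i,k) = (\<Sum>l<n. U $$ (i,l) * real_diag n d $$ (l,k))"
      using assms that by (simp add: index_mult_mat_sum[of _ n n _ n])
    also have "\<dots> = (\<Sum>l<n. if l = k then U $$ (i,l) * complex_of_real (d k) else 0)"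
      using that by (intro sum.cong) (auto simp: real_diag_def)
    finally show ?thesis using that by simp
  qed
  thus ?thesis using assms by (subst index_mult_mat_sum[of _ n n _ n]) auto
qed

lemma cscalar_prod_self:
  "w \<bullet>c (w :: complex vec) = complex_of_real (\<Sum>i<dim_vec w. (cmod (w $ i))\<^sup>2)"
proof -
  have "w \<bullet>c w = (\<Sum>i<dim_vec w. w $ i * cnj (w $ i))"
    by (simp add: scalar_prod_def atLeast0LessThan)
  also have "\<dots> = (\<Sum>i<dim_vec w. complex_of_real ((cmod (w $ i))\<^sup>2))"
    by (intro sum.cong refl) (simp only: complex_norm_square)
  finally show ?thesis by simp
qed

section \<open>Spectral theorem for Hermitian matrices\<close>

definition spectral_decomp :: "nat \<Rightarrow> complex mat \<Rightarrow> (nat \<Rightarrow> real) \<Rightarrow> complex mat \<Rightarrow> bool" where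
  "spectral_decomp n U d A \<longleftrightarrow> unitary_mat n U \<and> A = U * real_diag n d * mat_adjoint U"

lemma corthogonal_normalize_unitary:
  assumes ws: "set ws \<subseteq> carrier_vec n" "corthogonal ws" "length ws = n"
  shows "\<exists>W. unitary_mat n W \<and> (\<forall>j<n. \<exists>c. col W j = c \<cdot>\<^sub>v ws ! j)"
proof -
  have wsc: "ws ! j \<in> carrier_vec n" if "j < n" for j using ws that by auto
  define nr where "nr j = (\<Sum>i<n. (cmod ((ws ! j) $ i))\<^sup>2)" for j
  have nr: "ws ! j \<bullet>c ws ! j = complex_of_real (nr j)" if "j < n" for j
    using cscalar_prod_self[of "ws ! j"] wsc[OF that] nr_def by auto
  have nr_pos: "nr j > 0" if "j < n" for j
  proof -
    have "ws ! j \<bullet>c ws ! j \<noteq> 0" using corthogonalD[OF ws(2), of j j] that ws(3) by auto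
    moreover have "nr j \<ge> 0" unfolding nr_def by (auto intro: sum_nonneg)
    ultimately show ?thesis using nr[OF that] by force
  qed
  define c where "c j = complex_of_real (1 / sqrt (nr j))" for j
  define W where "W = mat n n (\<lambda>(i,j). c j * (ws ! j) $ i)"
  have W: "W \<in> carrier_mat n n" unfolding W_def by auto
  have "mat_adjoint W * W = 1\<^sub>m n"
  proof (rule eq_matI)
    fix i j assume "i < dim_row (1\<^sub>m n)" "j < dim_col (1\<^sub>m n)"
    hence i: "i < n" and j: "j < n" by auto
    have "(mat_adjoint W * W) $$ (i,j) = (\<Sum>k<n. cnj (c i * (ws ! i) $ k) * (c j * (ws ! j) $ k))"
      using i j W by (subst index_mult_mat_sum[of _ n n _ n]) (auto simp: W_def)
    also have "\<dots> = cnj (c i) * c j * (ws ! j \<bullet>c ws ! i)"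
      using wsc[OF i] wsc[OF j] by (simp add: scalar_prod_def atLeast0LessThan sum_distrib_left mult_ac)
    also have "\<dots> = 1\<^sub>m n $$ (i,j)"
    proof (cases "i = j")
      case True
      have "sqrt (nr i) * sqrt (nr i) = nr i" using nr_pos[OF i] by simp
      then show ?thesis using True nr[OF i] i nr_pos[OF i] unfolding c_def by (simp flip: of_real_mult)
    next
      case False
      then show ?thesis using corthogonalD[OF ws(2), of j i] i j ws(3) by auto
    qed
    finally show "(mat_adjoint W * W) $$ (i,j) = 1\<^sub>m n $$ (i,j)" .
  qed (use W in auto)
  moreover have "col W j = c j \<cdot>\<^sub>v ws ! j" if "j < n" for j
    using wsc[OF that] that by (intro eq_vecI) (auto simp: W_def)
  ultimately show ?thesis using W unfolding unitary_mat_def by blast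
qed

lemma exists_unitary_eigenvector_col:
  fixes A :: "complex mat"
  assumes A: "A \<in> carrier_mat (Suc m) (Suc m)"
  shows "\<exists>W e. unitary_mat (Suc m) W \<and> A *\<^sub>v col W 0 = e \<cdot>\<^sub>v col W 0"
proof -
  define n where "n = Suc m"
  have "degree (char_poly A) = n" using degree_monic_char_poly[OF A] n_def by auto
  hence "\<not> constant (poly (char_poly A))" unfolding constant_degree n_def by simp
  then obtain e where "poly (char_poly A) e = 0" using fundamental_theorem_of_algebra by blast
  hence "eigenvalue A e" using eigenvalue_root_char_poly[OF A] by auto
  hence "eigenvector A (find_eigenvector A e) e" using find_eigenvector[OF A] by auto
  then obtain v where v: "v \<in> carrier_vec n" "v \<noteq> 0\<^sub>v n" "A *\<^sub>v v = e \<cdot>\<^sub>v v"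
    using A n_def unfolding eigenvector_def by auto
  interpret cof_vec_space n "TYPE(complex)" .
  define b where "b = basis_completion v"
  from basis_completion[OF v(1) v(2), folded b_def]
  have dist_b: "distinct b" and indep: "\<not> lin_dep (set b)" and b: "set b \<subseteq> carrier_vec n"
    and hdb: "hd b = v" and len_b: "length b = n" by auto
  from hdb len_b obtain vs where bv: "b = v # vs" by (cases b) (auto simp: n_def)
  define ws where "ws = gram_schmidt n b"
  from gram_schmidt_result[OF b dist_b indep ws_def]
  have ws: "set ws \<subseteq> carrier_vec n" "corthogonal ws" "length ws = n" by (auto simp: len_b)
  have "hd ws = v" using gram_schmidt_hd[OF v(1), of vs] bv ws_def by simp
  hence ws0: "ws ! 0 = v" using ws(3) n_def by (cases ws) auto
  obtain W where W: "unitary_mat n W" and "\<forall>j<n. \<exists>c. col W j = c \<cdot>\<^sub>v ws ! j"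
    using corthogonal_normalize_unitary[OF ws] by blast
  then obtain c where c: "col W 0 = c \<cdot>\<^sub>v v" using ws0 n_def by auto
  have "A *\<^sub>v col W 0 = e \<cdot>\<^sub>v col W 0"
    unfolding c using v A n_def by (simp add: mult_mat_vec[of _ n n] smult_smult_assoc mult.commute)
  thus ?thesis using W n_def by blast
qed

lemma spectral_decomp_unitary_similar:
  assumes W: "unitary_mat n W" and A: "A \<in> carrier_mat n n"
    and D: "spectral_decomp n U d (mat_adjoint W * A * W)"
  shows "spectral_decomp n (W * U) d A"
proof -
  have Wc: "W \<in> carrier_mat n n" and Uc: "U \<in> carrier_mat n n"
    using W D unitary_mat_carrier unfolding spectral_decomp_def by auto
  have WW: "mat_adjoint W * W = 1\<^sub>m n" and UU: "mat_adjoint U * U = 1\<^sub>m n"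
    using W D unfolding unitary_mat_def spectral_decomp_def by auto
  have "mat_adjoint (W * U) * (W * U) = mat_adjoint U * ((mat_adjoint W * W) * U)"
    using Wc Uc by (simp add: mat_adjoint_mult[of W n n U n] assoc_mult_mat[of _ n n _ n _ n])
  hence "unitary_mat n (W * U)" using WW UU Wc Uc unfolding unitary_mat_def by simp
  moreover have "A = (W * U) * real_diag n d * mat_adjoint (W * U)"
  proof -
    have "A = (W * mat_adjoint W) * A * (W * mat_adjoint W)"
      using unitary_mat_mult_adjoint[OF W] A by simp
    also have "\<dots> = W * (mat_adjoint W * A * W) * mat_adjoint W"
      using Wc A by (simp add: assoc_mult_mat[of _ n n _ n _ n] mult_carrier_mat[of _ n n _ n])
    also have "\<dots> = (W * U) * real_diag n d * mat_adjoint (W * U)"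
      using D Wc Uc unfolding spectral_decomp_def
      by (simp add: mat_adjoint_mult[of _ n n _ n] assoc_mult_mat[of _ n n _ n _ n] mult_carrier_mat[of _ n n _ n])
    finally show ?thesis .
  qed
  ultimately show ?thesis unfolding spectral_decomp_def by blast
qed

lemma unitary_conj_eigenvector_col:
  assumes W: "unitary_mat n W" and A: "A \<in> carrier_mat n n" and k: "k < n"
    and ev: "A *\<^sub>v col W k = e \<cdot>\<^sub>v col W k" and i: "i < n"
  shows "(mat_adjoint W * A * W) $$ (i,k) = (if i = k then e else 0)"
proof -
  have Wc: "W \<in> carrier_mat n n" and WW: "mat_adjoint W * W = 1\<^sub>m n"
    using W unfolding unitary_mat_def by auto
  have "col (mat_adjoint W * A * W) k = mat_adjoint W *\<^sub>v (A *\<^sub>v col W k)"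
    using A Wc k col_mult2[of "mat_adjoint W" n n "A * W" n k] col_mult2[of A n n W n k]
    by (simp add: assoc_mult_mat[of _ n n _ n _ n])
  also have "\<dots> = e \<cdot>\<^sub>v col (mat_adjoint W * W) k"
    unfolding ev using Wc k mult_mat_vec[of "mat_adjoint W" n n "col W k" e]
      carrier_vecI[of "col W k" n] col_mult2[of "mat_adjoint W" n n W n k] by simp
  finally have "col (mat_adjoint W * A * W) k $ i = (e \<cdot>\<^sub>v col (1\<^sub>m n) k) $ i" using WW by simp
  thus ?thesis using i k A Wc by auto
qed

definition one_block_mat :: "nat \<Rightarrow> complex mat \<Rightarrow> complex mat" where
  "one_block_mat m U = mat (Suc m) (Suc m)
     (\<lambda>(i,j). if i = 0 \<and> j = 0 then 1 else if i = 0 \<or> j = 0 then 0 else U $$ (i - 1, j - 1))"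

lemma one_block_mat_carrier: "one_block_mat m U \<in> carrier_mat (Suc m) (Suc m)"
  by (simp add: one_block_mat_def)

lemma index_one_block_mat [simp]:
  "one_block_mat m U $$ (0,0) = 1"
  "k < m \<Longrightarrow> one_block_mat m U $$ (0, Suc k) = 0"
  "k < m \<Longrightarrow> one_block_mat m U $$ (Suc k, 0) = 0"
  "i < m \<Longrightarrow> k < m \<Longrightarrow> one_block_mat m U $$ (Suc i, Suc k) = U $$ (i,k)"
  by (simp_all add: one_block_mat_def)

lemma unitary_one_block_mat:
  assumes U: "unitary_mat m U"
  shows "unitary_mat (Suc m) (one_block_mat m U)"
proof -
  let ?U1 = "one_block_mat m U"
  have Uc: "U \<in> carrier_mat m m" using unitary_mat_carrier[OF U] .
  have U1c: "?U1 \<in> carrier_mat (Suc m) (Suc m)" by (rule one_block_mat_carrier)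
  have U_orth: "(\<Sum>k<m. cnj (U $$ (k,i)) * U $$ (k,j)) = (if i = j then 1 else 0)" if "i < m" "j < m" for i j
  proof -
    have "(mat_adjoint U * U) $$ (i,j) = (\<Sum>k<m. cnj (U $$ (k,i)) * U $$ (k,j))"
      using that Uc by (subst index_mult_mat_sum[of _ m m _ m]) auto
    thus ?thesis using U that unfolding unitary_mat_def by auto
  qed
  have "mat_adjoint ?U1 * ?U1 = 1\<^sub>m (Suc m)"
  proof (rule eq_matI)
    fix i j assume "i < dim_row (1\<^sub>m (Suc m))" "j < dim_col (1\<^sub>m (Suc m))"
    hence i: "i < Suc m" and j: "j < Suc m" by auto
    have "(mat_adjoint ?U1 * ?U1) $$ (i,j) = (\<Sum>k<Suc m. cnj (?U1 $$ (k,i)) * ?U1 $$ (k,j))"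
      using i j U1c by (subst index_mult_mat_sum[of _ "Suc m" "Suc m" _ "Suc m"]) auto
    also have "\<dots> = cnj (?U1 $$ (0,i)) * ?U1 $$ (0,j) + (\<Sum>k<m. cnj (?U1 $$ (Suc k,i)) * ?U1 $$ (Suc k,j))"
      by (simp only: sum.lessThan_Suc_shift)
    also have "\<dots> = 1\<^sub>m (Suc m) $$ (i,j)"
    proof (cases i)
      case 0
      then show ?thesis using j by (cases j) auto
    next
      case (Suc i')
      show ?thesis
      proof (cases j)
        case 0
        then show ?thesis using i Suc by auto
      next
        case (Suc j')
        have "(\<Sum>k<m. cnj (?U1 $$ (Suc k,i)) * ?U1 $$ (Suc k,j)) = (\<Sum>k<m. cnj (U $$ (k,i')) * U $$ (k,j'))"
          using i j \<open>i = Suc i'\<close> Suc by (intro sum.cong) auto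
        then show ?thesis using U_orth[of i' j'] i j \<open>i = Suc i'\<close> Suc by auto
      qed
    qed
    finally show "(mat_adjoint ?U1 * ?U1) $$ (i,j) = 1\<^sub>m (Suc m) $$ (i,j)" .
  qed (use U1c in auto)
  thus ?thesis using U1c unfolding unitary_mat_def by blast
qed

lemma spectral_decomp_extend:
  fixes A :: "complex mat" and r :: real
  assumes A: "A \<in> carrier_mat (Suc m) (Suc m)"
    and col0: "\<And>i. i < Suc m \<Longrightarrow> A $$ (i,0) = (if i = 0 then complex_of_real r else 0)"
    and row0: "\<And>j. j < Suc m \<Longrightarrow> A $$ (0,j) = (if j = 0 then complex_of_real r else 0)"
    and D: "spectral_decomp m U d (mat m m (\<lambda>(i,j). A $$ (Suc i, Suc j)))"
  shows "spectral_decomp (Suc m) (one_block_mat m U) (\<lambda>i. if i = 0 then r else d (i - 1)) A"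
proof -
  let ?U1 = "one_block_mat m U" and ?d1 = "\<lambda>i. if i = 0 then r else d (i - 1)"
  have U: "unitary_mat m U" and Uc: "U \<in> carrier_mat m m"
    and eq: "mat m m (\<lambda>(i,j). A $$ (Suc i, Suc j)) = U * real_diag m d * mat_adjoint U"
    using D unitary_mat_carrier unfolding spectral_decomp_def by auto
  have U1c: "?U1 \<in> carrier_mat (Suc m) (Suc m)" by (rule one_block_mat_carrier)
  have A_low: "A $$ (Suc i, Suc j) = (\<Sum>k<m. U $$ (i,k) * complex_of_real (d k) * cnj (U $$ (j,k)))"
    if "i < m" "j < m" for i j
  proof -
    have "A $$ (Suc i, Suc j) = mat m m (\<lambda>(i,j). A $$ (Suc i, Suc j)) $$ (i,j)" using that by simp
    thus ?thesis unfolding eq using index_unitary_diag_adjoint[OF Uc that] by simp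
  qed
  have "A = ?U1 * real_diag (Suc m) ?d1 * mat_adjoint ?U1"
  proof (rule eq_matI)
    fix i j assume "i < dim_row (?U1 * real_diag (Suc m) ?d1 * mat_adjoint ?U1)"
      "j < dim_col (?U1 * real_diag (Suc m) ?d1 * mat_adjoint ?U1)"
    hence i: "i < Suc m" and j: "j < Suc m" using U1c by auto
    have "(?U1 * real_diag (Suc m) ?d1 * mat_adjoint ?U1) $$ (i,j)
        = (\<Sum>k<Suc m. ?U1 $$ (i,k) * complex_of_real (?d1 k) * cnj (?U1 $$ (j,k)))"
      by (rule index_unitary_diag_adjoint[OF U1c i j])
    also have "\<dots> = ?U1 $$ (i,0) * complex_of_real r * cnj (?U1 $$ (j,0))
          + (\<Sum>k<m. ?U1 $$ (i,Suc k) * complex_of_real (d k) * cnj (?U1 $$ (j,Suc k)))"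
      by (simp only: sum.lessThan_Suc_shift) simp
    also have "\<dots> = A $$ (i,j)"
    proof (cases i)
      case 0
      then show ?thesis using col0[of 0] row0[of j] j by (cases j) auto
    next
      case (Suc i')
      show ?thesis
      proof (cases j)
        case 0
        then show ?thesis using i Suc col0[of i] by simp
      next
        case (Suc j')
        have "(\<Sum>k<m. ?U1 $$ (i,Suc k) * complex_of_real (d k) * cnj (?U1 $$ (j,Suc k)))
            = (\<Sum>k<m. U $$ (i',k) * complex_of_real (d k) * cnj (U $$ (j',k)))"
          using i j \<open>i = Suc i'\<close> Suc by (intro sum.cong refl) simp
        then show ?thesis using A_low[of i' j'] i j \<open>i = Suc i'\<close> Suc by simp
      qed
    qed
    finally show "A $$ (i,j) = (?U1 * real_diag (Suc m) ?d1 * mat_adjoint ?U1) $$ (i,j)" by simp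
  qed (use A U1c in auto)
  thus ?thesis using unitary_one_block_mat[OF U] unfolding spectral_decomp_def by blast
qed

theorem hermitian_spectral_decomp:
  fixes A :: "complex mat"
  assumes "A \<in> carrier_mat n n" "mat_adjoint A = A"
  shows "\<exists>U d. spectral_decomp n U d A"
using assms proof (induction n arbitrary: A)
  case 0
  have "A = 1\<^sub>m 0 * real_diag 0 (\<lambda>_. 0) * mat_adjoint (1\<^sub>m 0)" using 0 by (intro eq_matI) auto
  moreover have "unitary_mat 0 (1\<^sub>m 0)" by (auto simp: unitary_mat_def intro!: eq_matI)
  ultimately show ?case unfolding spectral_decomp_def by blast
next
  case (Suc m)
  obtain W e where W: "unitary_mat (Suc m) W" and ev: "A *\<^sub>v col W 0 = e \<cdot>\<^sub>v col W 0"
    using exists_unitary_eigenvector_col[OF Suc.prems(1)] by blast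
  have Wc: "W \<in> carrier_mat (Suc m) (Suc m)" using unitary_mat_carrier[OF W] .
  define A' where "A' = mat_adjoint W * A * W"
  have A': "A' \<in> carrier_mat (Suc m) (Suc m)" unfolding A'_def using Suc.prems(1) Wc by auto
  have hA': "mat_adjoint A' = A'"
    unfolding A'_def using Suc.prems Wc
    by (simp add: mat_adjoint_mult[of _ "Suc m" "Suc m" _ "Suc m"] assoc_mult_mat[of _ "Suc m" "Suc m" _ "Suc m" _ "Suc m"])
  have col0: "A' $$ (i,0) = (if i = 0 then e else 0)" if "i < Suc m" for i
    unfolding A'_def using unitary_conj_eigenvector_col[OF W Suc.prems(1) _ ev that] by simp
  have row0: "A' $$ (0,j) = (if j = 0 then e else 0)" if "j < Suc m" for j
    using hermitian_cnj_index[OF A' hA' zero_less_Suc that] col0[OF that] col0[of 0] by (cases "j = 0") auto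
  have "cnj e = e" using hermitian_cnj_index[OF A' hA' zero_less_Suc zero_less_Suc] col0[of 0] by simp
  hence e_real: "complex_of_real (Re e) = e" by (metis Reals_cnj_iff complex_is_Real_iff of_real_Re)
  define A3 where "A3 = mat m m (\<lambda>(i,j). A' $$ (Suc i, Suc j))"
  have A3: "A3 \<in> carrier_mat m m" unfolding A3_def by auto
  have "mat_adjoint A3 = A3"
    using A3 by (rule mat_adjoint_eqI) (simp add: A3_def hermitian_cnj_index[OF A' hA'])
  then obtain U3 d3 where "spectral_decomp m U3 d3 A3" using Suc.IH[OF A3] by blast
  hence "spectral_decomp (Suc m) (one_block_mat m U3) (\<lambda>i. if i = 0 then Re e else d3 (i - 1)) A'"
    by (intro spectral_decomp_extend) (use A' col0 row0 e_real A3_def in auto)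
  thus ?case using spectral_decomp_unitary_similar[OF W Suc.prems(1)] A'_def by blast
qed

section \<open>Quadratic forms and the functional calculus\<close>

(* Vectors are functions nat \<Rightarrow> complex of which only the first n values matter,
   which avoids carrier bookkeeping. *)
definition cinner :: "nat \<Rightarrow> (nat \<Rightarrow> complex) \<Rightarrow> (nat \<Rightarrow> complex) \<Rightarrow> complex" where
  "cinner n x y = (\<Sum>i<n. cnj (x i) * y i)"

definition mat_app :: "nat \<Rightarrow> complex mat \<Rightarrow> (nat \<Rightarrow> complex) \<Rightarrow> nat \<Rightarrow> complex" where
  "mat_app n A x = (\<lambda>i. \<Sum>j<n. A $$ (i,j) * x j)"

definition col_fn :: "complex mat \<Rightarrow> nat \<Rightarrow> nat \<Rightarrow> complex" where
  "col_fn U k = (\<lambda>i. U $$ (i,k))"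

lemma cinner_cong:
  "(\<And>i. i < n \<Longrightarrow> x i = x' i) \<Longrightarrow> (\<And>i. i < n \<Longrightarrow> y i = y' i) \<Longrightarrow> cinner n x y = cinner n x' y'"
  unfolding cinner_def by (intro sum.cong) auto

lemma cinner_cnj: "cnj (cinner n x y) = cinner n y x"
  unfolding cinner_def by (simp add: mult.commute)

lemma cinner_scale_right: "cinner n x (\<lambda>i. a * y i) = a * cinner n x y"
  unfolding cinner_def by (simp add: sum_distrib_left mult_ac)

lemma cinner_scale_left: "cinner n (\<lambda>i. a * x i) y = cnj a * cinner n x y"
  unfolding cinner_def by (simp add: sum_distrib_left mult_ac)

lemma unitary_col_orthonormal:
  assumes "unitary_mat n U" "i < n" "j < n"
  shows "cinner n (col_fn U i) (col_fn U j) = (if i = j then 1 else 0)"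
proof -
  have U: "U \<in> carrier_mat n n" using assms unitary_mat_carrier by auto
  have "(mat_adjoint U * U) $$ (i,j) = (\<Sum>k<n. cnj (U $$ (k,i)) * U $$ (k,j))"
    using assms U by (subst index_mult_mat_sum[of _ n n _ n]) auto
  thus ?thesis using assms unfolding unitary_mat_def cinner_def col_fn_def by auto
qed

lemma unitary_row_orthonormal:
  assumes "unitary_mat n U" "i < n" "j < n"
  shows "(\<Sum>k<n. U $$ (i,k) * cnj (U $$ (j,k))) = (if i = j then 1 else 0)"
proof -
  have U: "U \<in> carrier_mat n n" using assms unitary_mat_carrier by auto
  have "(U * mat_adjoint U) $$ (i,j) = (\<Sum>k<n. U $$ (i,k) * cnj (U $$ (j,k)))"
    using assms U by (subst index_mult_mat_sum[of _ n n _ n]) auto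
  thus ?thesis using assms unitary_mat_mult_adjoint[OF assms(1)] by auto
qed

lemma unitary_col_expansion:
  assumes "unitary_mat n U" "i < n"
  shows "(\<Sum>k<n. U $$ (i,k) * cinner n (col_fn U k) x) = x i"
proof -
  have "(\<Sum>k<n. U $$ (i,k) * cinner n (col_fn U k) x) = (\<Sum>k<n. \<Sum>l<n. U $$ (i,k) * cnj (U $$ (l,k)) * x l)"
    unfolding cinner_def col_fn_def by (simp add: sum_distrib_left mult_ac)
  also have "\<dots> = (\<Sum>l<n. (\<Sum>k<n. U $$ (i,k) * cnj (U $$ (l,k))) * x l)"
    by (subst sum.swap) (simp add: sum_distrib_right)
  also have "\<dots> = (\<Sum>l<n. if l = i then x l else 0)"
    using unitary_row_orthonormal[OF assms(1) assms(2)] by (intro sum.cong) auto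
  finally show ?thesis using assms(2) by simp
qed

lemma unitary_parseval:
  assumes "unitary_mat n U"
  shows "cinner n x y = (\<Sum>k<n. cnj (cinner n (col_fn U k) x) * cinner n (col_fn U k) y)"
proof -
  have "(\<Sum>k<n. cnj (cinner n (col_fn U k) x) * cinner n (col_fn U k) y) = (\<Sum>k<n. cinner n x (col_fn U k) * cinner n (col_fn U k) y)"
    by (simp add: cinner_cnj)
  also have "\<dots> = (\<Sum>k<n. \<Sum>i<n. cnj (x i) * (U $$ (i,k) * cinner n (col_fn U k) y))"
    unfolding cinner_def[of n x] col_fn_def by (simp add: sum_distrib_left sum_distrib_right mult_ac)
  also have "\<dots> = (\<Sum>i<n. cnj (x i) * (\<Sum>k<n. U $$ (i,k) * cinner n (col_fn U k) y))"
    by (subst sum.swap) (simp add: sum_distrib_left)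
  also have "\<dots> = cinner n x y"
    unfolding cinner_def[of n x y] using unitary_col_expansion[OF assms] by (intro sum.cong) auto
  finally show ?thesis by simp
qed

lemma spectral_decomp_carrier: "spectral_decomp n U d A \<Longrightarrow> A \<in> carrier_mat n n"
  unfolding spectral_decomp_def using unitary_mat_carrier by fastforce

lemma spectral_decomp_index:
  assumes "spectral_decomp n U d A" "i < n" "j < n"
  shows "A $$ (i,j) = (\<Sum>k<n. U $$ (i,k) * complex_of_real (d k) * cnj (U $$ (j,k)))"
  using assms index_unitary_diag_adjoint[of U n i j d] unitary_mat_carrier unfolding spectral_decomp_def by auto

lemma spectral_decomp_mat_app:
  assumes "spectral_decomp n U d A" "i < n"
  shows "mat_app n A x i = (\<Sum>k<n. U $$ (i,k) * complex_of_real (d k) * cinner n (col_fn U k) x)"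
proof -
  have "mat_app n A x i = (\<Sum>j<n. \<Sum>k<n. U $$ (i,k) * complex_of_real (d k) * cnj (U $$ (j,k)) * x j)"
    unfolding mat_app_def using spectral_decomp_index[OF assms(1) assms(2)] by (simp add: sum_distrib_right)
  also have "\<dots> = (\<Sum>k<n. U $$ (i,k) * complex_of_real (d k) * cinner n (col_fn U k) x)"
    by (subst sum.swap) (simp add: cinner_def col_fn_def sum_distrib_left mult_ac)
  finally show ?thesis .
qed

lemma spectral_decomp_cinner:
  assumes "spectral_decomp n U d A"
  shows "cinner n y (mat_app n A x) = (\<Sum>k<n. complex_of_real (d k) * cnj (cinner n (col_fn U k) y) * cinner n (col_fn U k) x)"
proof -
  have "cinner n y (mat_app n A x) = (\<Sum>i<n. cnj (y i) * (\<Sum>k<n. U $$ (i,k) * complex_of_real (d k) * cinner n (col_fn U k) x))"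
    unfolding cinner_def[of n y] using spectral_decomp_mat_app[OF assms] by (intro sum.cong) auto
  also have "\<dots> = (\<Sum>i<n. \<Sum>k<n. cnj (y i) * U $$ (i,k) * (complex_of_real (d k) * cinner n (col_fn U k) x))"
    by (simp add: sum_distrib_left mult_ac)
  also have "\<dots> = (\<Sum>k<n. \<Sum>i<n. cnj (y i) * U $$ (i,k) * (complex_of_real (d k) * cinner n (col_fn U k) x))"
    by (rule sum.swap)
  also have "\<dots> = (\<Sum>k<n. (\<Sum>i<n. cnj (y i) * U $$ (i,k)) * (complex_of_real (d k) * cinner n (col_fn U k) x))"
    by (simp add: sum_distrib_right)
  also have "\<dots> = (\<Sum>k<n. complex_of_real (d k) * cnj (cinner n (col_fn U k) y) * cinner n (col_fn U k) x)"
    by (intro sum.cong refl) (simp add: cinner_def col_fn_def mult_ac)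
  finally show ?thesis .
qed

lemma spectral_decomp_eigenvector:
  assumes "spectral_decomp n U d A" "k < n" "i < n"
  shows "mat_app n A (col_fn U k) i = complex_of_real (d k) * U $$ (i,k)"
proof -
  have u: "unitary_mat n U" using assms unfolding spectral_decomp_def by auto
  have "mat_app n A (col_fn U k) i = (\<Sum>l<n. U $$ (i,l) * complex_of_real (d l) * cinner n (col_fn U l) (col_fn U k))"
    using spectral_decomp_mat_app[OF assms(1) assms(3)] .
  also have "\<dots> = (\<Sum>l<n. if l = k then U $$ (i,k) * complex_of_real (d k) else 0)"
    using unitary_col_orthonormal[OF u _ assms(2)] by (intro sum.cong) auto
  also have "\<dots> = U $$ (i,k) * complex_of_real (d k)" using assms(2) by simp
  finally show ?thesis by simp
qed

lemma spectral_decomp_cinner_eigenvector: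
  assumes "spectral_decomp n U d A" "k < n"
  shows "cinner n z (mat_app n A (col_fn U k)) = complex_of_real (d k) * cinner n z (col_fn U k)"
proof -
  have "cinner n z (mat_app n A (col_fn U k)) = cinner n z (\<lambda>i. complex_of_real (d k) * col_fn U k i)"
    using spectral_decomp_eigenvector[OF assms] by (intro cinner_cong) (auto simp: col_fn_def)
  thus ?thesis by (simp add: cinner_scale_right)
qed

lemma spectral_decomp_trace:
  assumes "spectral_decomp n U d A"
  shows "mat_trace A = complex_of_real (\<Sum>k<n. d k)"
proof -
  have A: "A \<in> carrier_mat n n" using spectral_decomp_carrier[OF assms] .
  have "mat_trace A = (\<Sum>i<n. \<Sum>k<n. U $$ (i,k) * complex_of_real (d k) * cnj (U $$ (i,k)))"
    unfolding mat_trace_def using A spectral_decomp_index[OF assms] by (intro sum.cong) auto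
  also have "\<dots> = (\<Sum>k<n. complex_of_real (d k) * cinner n (col_fn U k) (col_fn U k))"
    by (subst sum.swap) (simp add: cinner_def col_fn_def sum_distrib_left mult_ac)
  also have "\<dots> = (\<Sum>k<n. complex_of_real (d k))"
    using unitary_col_orthonormal[of n U] assms unfolding spectral_decomp_def by (intro sum.cong) auto
  finally show ?thesis by simp
qed

lemma spectral_decomp_hermitian:
  assumes "spectral_decomp n U d A"
  shows "mat_adjoint A = A"
proof (rule mat_adjoint_eqI[OF spectral_decomp_carrier[OF assms]])
  fix i j assume "i < n" "j < n"
  thus "cnj (A $$ (j,i)) = A $$ (i,j)" using spectral_decomp_index[OF assms] by (simp add: mult_ac)
qed

lemma index_mult_mat_vec_mat_app:
  "A \<in> carrier_mat n n \<Longrightarrow> v \<in> carrier_vec n \<Longrightarrow> i < n \<Longrightarrow> (A *\<^sub>v v) $ i = mat_app n A (\<lambda>j. v $ j) i"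
  by (auto simp: mat_app_def scalar_prod_def atLeast0LessThan intro!: sum.cong)

lemma psd_mat_iff_cinner:
  assumes "A \<in> carrier_mat n n"
  shows "psd_mat n A \<longleftrightarrow> hermitian_mat n A \<and> (\<forall>x. 0 \<le> Re (cinner n x (mat_app n A x)))"
proof -
  have eq: "(\<Sum>i<n. cnj (v $ i) * (A *\<^sub>v v) $ i) = cinner n (\<lambda>j. v $ j) (mat_app n A (\<lambda>j. v $ j))" if "v \<in> carrier_vec n" for v
    unfolding cinner_def using index_mult_mat_vec_mat_app[OF assms that] by (intro sum.cong) auto
  have "(\<forall>v \<in> carrier_vec n. Re (\<Sum>i<n. cnj (v $ i) * (A *\<^sub>v v) $ i) \<ge> 0) \<longleftrightarrow> (\<forall>x. 0 \<le> Re (cinner n x (mat_app n A x)))"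
  proof
    assume h: "\<forall>v \<in> carrier_vec n. Re (\<Sum>i<n. cnj (v $ i) * (A *\<^sub>v v) $ i) \<ge> 0"
    show "\<forall>x. 0 \<le> Re (cinner n x (mat_app n A x))"
    proof
      fix x :: "nat \<Rightarrow> complex"
      have v: "vec n x \<in> carrier_vec n" by simp
      have "cinner n x (mat_app n A x) = cinner n (\<lambda>j. vec n x $ j) (mat_app n A (\<lambda>j. vec n x $ j))"
        by (intro cinner_cong) (auto simp: mat_app_def intro!: sum.cong)
      thus "0 \<le> Re (cinner n x (mat_app n A x))" using h eq[OF v] v by metis
    qed
  next
    assume h: "\<forall>x. 0 \<le> Re (cinner n x (mat_app n A x))"
    show "\<forall>v \<in> carrier_vec n. Re (\<Sum>i<n. cnj (v $ i) * (A *\<^sub>v v) $ i) \<ge> 0"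
      using h eq by simp
  qed
  thus ?thesis unfolding psd_mat_def by simp
qed

lemma psd_mat_hermitian: "psd_mat n A \<Longrightarrow> mat_adjoint A = A"
  unfolding psd_mat_def hermitian_mat_def by auto

lemma psd_mat_carrier: "psd_mat n A \<Longrightarrow> A \<in> carrier_mat n n"
  unfolding psd_mat_def hermitian_mat_def by auto

lemma psd_mat_cinner_nonneg: "psd_mat n A \<Longrightarrow> 0 \<le> Re (cinner n x (mat_app n A x))"
  using psd_mat_iff_cinner[OF psd_mat_carrier] by blast

lemma spectral_decomp_cinner_col:
  assumes "spectral_decomp n U d A" "k < n"
  shows "cinner n (col_fn U k) (mat_app n A y) = complex_of_real (d k) * cinner n (col_fn U k) y"
proof -
  have u: "unitary_mat n U" using assms unfolding spectral_decomp_def by auto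
  have "cinner n (col_fn U k) (mat_app n A y) = (\<Sum>l<n. if l = k then complex_of_real (d k) * cinner n (col_fn U k) y else 0)"
    unfolding spectral_decomp_cinner[OF assms(1)]
    using unitary_col_orthonormal[OF u _ assms(2)] by (intro sum.cong) auto
  thus ?thesis using assms(2) by simp
qed

lemma spectral_decomp_psd_nonneg:
  assumes "spectral_decomp n U d A" "psd_mat n A" "k < n"
  shows "d k \<ge> 0"
proof -
  have u: "unitary_mat n U" using assms unfolding spectral_decomp_def by auto
  have A: "A \<in> carrier_mat n n" using spectral_decomp_carrier[OF assms(1)] .
  have "cinner n (col_fn U k) (mat_app n A (col_fn U k)) = complex_of_real (d k) * cinner n (col_fn U k) (col_fn U k)"
    using spectral_decomp_cinner_col[OF assms(1) assms(3)] .
  also have "\<dots> = complex_of_real (d k)" using unitary_col_orthonormal[OF u assms(3) assms(3)] by simp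
  finally show ?thesis using assms(2) psd_mat_iff_cinner[OF A] by (metis Re_complex_of_real)
qed

lemma spectral_decomp_fun_overlap:
  assumes U: "spectral_decomp n U d A" and V: "spectral_decomp n V e A" and i: "i < n" and j: "j < n"
  shows "complex_of_real (f (e i)) * cinner n (col_fn V i) (col_fn U j)
    = complex_of_real (f (d j)) * cinner n (col_fn V i) (col_fn U j)"
proof -
  have "complex_of_real (e i) * cinner n (col_fn V i) (col_fn U j) = cinner n (col_fn V i) (mat_app n A (col_fn U j))"
    using spectral_decomp_cinner_col[OF V i] by simp
  also have "\<dots> = complex_of_real (d j) * cinner n (col_fn V i) (col_fn U j)"
    by (rule spectral_decomp_cinner_eigenvector[OF U j])
  finally have "cinner n (col_fn V i) (col_fn U j) = 0 \<or> e i = d j" by simp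
  thus ?thesis by auto
qed

lemma spectral_decomp_fun_unique:
  assumes U: "spectral_decomp n U d A" and V: "spectral_decomp n V e A"
  shows "U * real_diag n (f \<circ> d) * mat_adjoint U = V * real_diag n (f \<circ> e) * mat_adjoint V"
proof -
  have u: "unitary_mat n U" and v: "unitary_mat n V" using U V unfolding spectral_decomp_def by auto
  have Uc: "U \<in> carrier_mat n n" and Vc: "V \<in> carrier_mat n n" using u v unitary_mat_carrier by auto
  define M where "M i j = cinner n (col_fn V i) (col_fn U j)" for i j
  have E2: "complex_of_real (f (e i)) * M i j = complex_of_real (f (d j)) * M i j" if "i < n" "j < n" for i j
    unfolding M_def by (rule spectral_decomp_fun_overlap[OF U V that])
  have E3: "U $$ (a,j) = (\<Sum>i<n. V $$ (a,i) * M i j)" if "a < n" for a j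
    using unitary_col_expansion[OF v that, of "col_fn U j"] by (simp add: M_def col_fn_def)
  have E4: "(\<Sum>j<n. M i j * cnj (U $$ (b,j))) = cnj (V $$ (b,i))" if "b < n" for b i
  proof -
    have "(\<Sum>j<n. M i j * cnj (U $$ (b,j))) = cnj (\<Sum>j<n. U $$ (b,j) * cinner n (col_fn U j) (col_fn V i))"
      by (simp add: M_def cinner_cnj mult.commute)
    also have "\<dots> = cnj (V $$ (b,i))" using unitary_col_expansion[OF u that, of "col_fn V i"] by (simp add: col_fn_def)
    finally show ?thesis .
  qed
  show ?thesis
  proof (rule eq_matI)
    fix a b assume "a < dim_row (V * real_diag n (f \<circ> e) * mat_adjoint V)" "b < dim_col (V * real_diag n (f \<circ> e) * mat_adjoint V)"
    hence a: "a < n" and b: "b < n" using Vc by auto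
    have "(U * real_diag n (f \<circ> d) * mat_adjoint U) $$ (a,b) = (\<Sum>j<n. U $$ (a,j) * complex_of_real (f (d j)) * cnj (U $$ (b,j)))"
      using index_unitary_diag_adjoint[OF Uc a b] by simp
    also have "\<dots> = (\<Sum>j<n. (\<Sum>i<n. V $$ (a,i) * M i j) * complex_of_real (f (d j)) * cnj (U $$ (b,j)))"
      by (intro sum.cong refl) (simp only: E3[OF a])
    also have "\<dots> = (\<Sum>j<n. \<Sum>i<n. V $$ (a,i) * (complex_of_real (f (d j)) * M i j) * cnj (U $$ (b,j)))"
      by (simp add: sum_distrib_left sum_distrib_right mult_ac)
    also have "\<dots> = (\<Sum>j<n. \<Sum>i<n. V $$ (a,i) * (complex_of_real (f (e i)) * M i j) * cnj (U $$ (b,j)))"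
      by (intro sum.cong refl, subst E2) auto
    also have "\<dots> = (\<Sum>i<n. \<Sum>j<n. V $$ (a,i) * complex_of_real (f (e i)) * (M i j * cnj (U $$ (b,j))))"
      by (subst sum.swap) (simp add: mult_ac)
    also have "\<dots> = (\<Sum>i<n. V $$ (a,i) * complex_of_real (f (e i)) * cnj (V $$ (b,i)))"
      using E4[OF b] by (simp add: sum_distrib_left[symmetric])
    also have "\<dots> = (V * real_diag n (f \<circ> e) * mat_adjoint V) $$ (a,b)"
      using index_unitary_diag_adjoint[OF Vc a b] by simp
    finally show "(U * real_diag n (f \<circ> d) * mat_adjoint U) $$ (a,b) = (V * real_diag n (f \<circ> e) * mat_adjoint V) $$ (a,b)" .
  qed (use Uc Vc in auto)
qed

lemma mat_fun_spectral_decomp: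
  assumes "spectral_decomp n U d A"
  shows "mat_fun n f A = U * real_diag n (f \<circ> d) * mat_adjoint U"
proof -
  let ?P = "\<lambda>M. \<exists>U d. unitary_mat n U \<and> A = U * real_diag n d * mat_adjoint U \<and> M = U * real_diag n (f \<circ> d) * mat_adjoint U"
  have ex: "?P (U * real_diag n (f \<circ> d) * mat_adjoint U)" using assms unfolding spectral_decomp_def by blast
  have "?P (mat_fun n f A)" unfolding mat_fun_def using someI_ex[of ?P] ex by blast
  then obtain U' d' where "spectral_decomp n U' d' A" "mat_fun n f A = U' * real_diag n (f \<circ> d') * mat_adjoint U'"
    unfolding spectral_decomp_def by blast
  thus ?thesis using spectral_decomp_fun_unique[OF assms] by metis
qed

lemma spectral_decomp_mat_fun:
  "spectral_decomp n U d A \<Longrightarrow> spectral_decomp n U (f \<circ> d) (mat_fun n f A)"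
  using mat_fun_spectral_decomp[of n U d A f] unfolding spectral_decomp_def by simp

lemma cinner_mat_app_adjoint:
  assumes "A \<in> carrier_mat n n"
  shows "cinner n y (mat_app n A x) = cinner n (mat_app n (mat_adjoint A) y) x"
proof -
  have "cinner n y (mat_app n A x) = (\<Sum>i<n. \<Sum>j<n. cnj (y i) * A $$ (i,j) * x j)"
    unfolding cinner_def mat_app_def by (simp add: sum_distrib_left mult_ac)
  also have "\<dots> = (\<Sum>j<n. \<Sum>i<n. cnj (y i) * A $$ (i,j) * x j)" by (rule sum.swap)
  also have "\<dots> = cinner n (mat_app n (mat_adjoint A) y) x"
    unfolding cinner_def mat_app_def using assms by (auto simp: sum_distrib_left sum_distrib_right mult_ac intro!: sum.cong)
  finally show ?thesis .
qed

lemma mat_app_mult: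
  assumes "A \<in> carrier_mat n n" "B \<in> carrier_mat n n" "i < n"
  shows "mat_app n (A * B) x i = mat_app n A (mat_app n B x) i"
proof -
  have "mat_app n (A * B) x i = (\<Sum>j<n. \<Sum>l<n. A $$ (i,l) * B $$ (l,j) * x j)"
    unfolding mat_app_def using index_mult_mat_sum[OF assms(1,2) assms(3)] by (simp add: sum_distrib_right del: index_mult_mat)
  also have "\<dots> = (\<Sum>l<n. \<Sum>j<n. A $$ (i,l) * B $$ (l,j) * x j)" by (rule sum.swap)
  also have "\<dots> = mat_app n A (mat_app n B x) i"
    unfolding mat_app_def by (simp add: sum_distrib_left mult_ac)
  finally show ?thesis .
qed

lemma spectral_decomp_quadratic_form:
  assumes "spectral_decomp n U d A"
  shows "Re (cinner n z (mat_app n A z)) = (\<Sum>k<n. d k * (cmod (cinner n (col_fn U k) z))^2)"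
proof -
  have "cinner n z (mat_app n A z) = (\<Sum>k<n. complex_of_real (d k * (cmod (cinner n (col_fn U k) z))^2))"
    unfolding spectral_decomp_cinner[OF assms]
  proof (intro sum.cong refl)
    fix k
    have "cnj (cinner n (col_fn U k) z) * cinner n (col_fn U k) z = complex_of_real ((cmod (cinner n (col_fn U k) z))^2)"
      by (simp only: complex_norm_square mult.commute)
    thus "complex_of_real (d k) * cnj (cinner n (col_fn U k) z) * cinner n (col_fn U k) z = complex_of_real (d k * (cmod (cinner n (col_fn U k) z))^2)"
      by (simp add: mult.assoc)
  qed
  thus ?thesis by (simp only: Re_sum Re_complex_of_real)
qed

lemma cinner_unitary_comb:
  "cinner n z (\<lambda>i. \<Sum>l<n. V $$ (i,l) * a l) = (\<Sum>l<n. a l * cinner n z (col_fn V l))"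
proof -
  have "cinner n z (\<lambda>i. \<Sum>l<n. V $$ (i,l) * a l) = (\<Sum>i<n. \<Sum>l<n. cnj (z i) * V $$ (i,l) * a l)"
    unfolding cinner_def by (simp add: sum_distrib_left mult_ac)
  also have "\<dots> = (\<Sum>l<n. \<Sum>i<n. cnj (z i) * V $$ (i,l) * a l)" by (rule sum.swap)
  also have "\<dots> = (\<Sum>l<n. a l * cinner n z (col_fn V l))"
    unfolding cinner_def col_fn_def by (simp add: sum_distrib_left mult_ac)
  finally show ?thesis .
qed

lemma cinner_col_unitary_comb:
  assumes "unitary_mat n V" "j < n"
  shows "cinner n (col_fn V j) (\<lambda>i. \<Sum>l<n. V $$ (i,l) * a l) = a j"
proof -
  have "cinner n (col_fn V j) (\<lambda>i. \<Sum>l<n. V $$ (i,l) * a l) = (\<Sum>l<n. a l * cinner n (col_fn V j) (col_fn V l))"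
    by (rule cinner_unitary_comb)
  also have "\<dots> = (\<Sum>l<n. if l = j then a j else 0)"
    using unitary_col_orthonormal[OF assms(1) assms(2)] by (intro sum.cong) auto
  finally show ?thesis using assms(2) by simp
qed

lemma mat_app_scale: "mat_app n A (\<lambda>i. a * z i) i = a * mat_app n A z i"
  unfolding mat_app_def by (simp add: sum_distrib_left mult_ac)

lemma mat_trace_unitary_basis:
  assumes "unitary_mat n V" "A \<in> carrier_mat n n"
  shows "(\<Sum>j<n. cinner n (col_fn V j) (mat_app n A (col_fn V j))) = mat_trace A"
proof -
  have "(\<Sum>j<n. cinner n (col_fn V j) (mat_app n A (col_fn V j))) = (\<Sum>j<n. \<Sum>i<n. \<Sum>l<n. A $$ (i,l) * (V $$ (l,j) * cnj (V $$ (i,j))))"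
    unfolding cinner_def mat_app_def col_fn_def by (simp add: sum_distrib_left mult_ac)
  also have "\<dots> = (\<Sum>i<n. \<Sum>j<n. \<Sum>l<n. A $$ (i,l) * (V $$ (l,j) * cnj (V $$ (i,j))))" by (rule sum.swap)
  also have "\<dots> = (\<Sum>i<n. \<Sum>l<n. \<Sum>j<n. A $$ (i,l) * (V $$ (l,j) * cnj (V $$ (i,j))))"
    by (rule sum.cong[OF refl], rule sum.swap)
  also have "\<dots> = (\<Sum>i<n. \<Sum>l<n. A $$ (i,l) * (if l = i then 1 else 0))"
    using unitary_row_orthonormal[OF assms(1)] by (intro sum.cong refl) (simp add: sum_distrib_left[symmetric])
  also have "\<dots> = (\<Sum>i<n. \<Sum>l<n. if l = i then A $$ (i,i) else 0)" by (intro sum.cong refl) auto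
  also have "\<dots> = (\<Sum>i<n. A $$ (i,i))" by simp
  also have "\<dots> = mat_trace A" unfolding mat_trace_def using assms(2) by simp
  finally show ?thesis .
qed

section \<open>Loewner order\<close>

lemma loewner_le_smult_iff:
  assumes rho: "psd_mat n \<rho>" and sc: "\<sigma> \<in> carrier_mat n n" and sh: "mat_adjoint \<sigma> = \<sigma>"
  shows "loewner_le n \<rho> (complex_of_real lam \<cdot>\<^sub>m \<sigma>) \<longleftrightarrow>
    (\<forall>x. Re (cinner n x (mat_app n \<rho> x)) \<le> lam * Re (cinner n x (mat_app n \<sigma> x)))"
proof -
  have rc: "\<rho> \<in> carrier_mat n n" and rh: "mat_adjoint \<rho> = \<rho>"
    using psd_mat_carrier[OF rho] psd_mat_hermitian[OF rho] .
  define M where "M = complex_of_real lam \<cdot>\<^sub>m \<sigma> - \<rho>"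
  have Mc: "M \<in> carrier_mat n n" unfolding M_def using sc rc by auto
  have ent: "M $$ (i,j) = complex_of_real lam * \<sigma> $$ (i,j) - \<rho> $$ (i,j)" if "i < n" "j < n" for i j
    unfolding M_def using sc rc that by simp
  have Mh: "mat_adjoint M = M"
    using Mc by (rule mat_adjoint_eqI) (simp add: ent hermitian_cnj_index[OF sc sh] hermitian_cnj_index[OF rc rh])
  have mvM: "mat_app n M x i = complex_of_real lam * mat_app n \<sigma> x i - mat_app n \<rho> x i" if "i < n" for x i
    unfolding mat_app_def using ent[OF that]
    by (simp add: left_diff_distrib sum_subtractf sum_distrib_left mult.assoc)
  have qM: "Re (cinner n x (mat_app n M x)) =
      lam * Re (cinner n x (mat_app n \<sigma> x)) - Re (cinner n x (mat_app n \<rho> x))" for x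
  proof -
    have "cinner n x (mat_app n M x) = cinner n x (\<lambda>i. complex_of_real lam * mat_app n \<sigma> x i - mat_app n \<rho> x i)"
      using mvM by (intro cinner_cong) auto
    also have "\<dots> = complex_of_real lam * cinner n x (mat_app n \<sigma> x) - cinner n x (mat_app n \<rho> x)"
      unfolding cinner_def by (simp add: right_diff_distrib sum_subtractf sum_distrib_left mult_ac)
    finally show ?thesis by simp
  qed
  have "loewner_le n \<rho> (complex_of_real lam \<cdot>\<^sub>m \<sigma>) \<longleftrightarrow> psd_mat n M"
    unfolding loewner_le_def M_def using rc sc by auto
  also have "\<dots> \<longleftrightarrow> (\<forall>x. 0 \<le> Re (cinner n x (mat_app n M x)))"
    using psd_mat_iff_cinner[OF Mc] Mc Mh unfolding hermitian_mat_def by auto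
  finally show ?thesis unfolding qM by simp
qed

lemma loewner_le_smult_hermitian:
  assumes rho: "psd_mat n \<rho>" and le: "loewner_le n \<rho> (complex_of_real lam \<cdot>\<^sub>m \<sigma>)" and lam: "lam \<noteq> 0"
  shows "\<sigma> \<in> carrier_mat n n" "mat_adjoint \<sigma> = \<sigma>"
proof -
  have rc: "\<rho> \<in> carrier_mat n n" and rh: "mat_adjoint \<rho> = \<rho>"
    using psd_mat_carrier[OF rho] psd_mat_hermitian[OF rho] .
  have "complex_of_real lam \<cdot>\<^sub>m \<sigma> \<in> carrier_mat n n" using le unfolding loewner_le_def by blast
  then show sc: "\<sigma> \<in> carrier_mat n n" by (metis carrier_matD carrier_matI index_smult_mat(2,3))
  define M where "M = complex_of_real lam \<cdot>\<^sub>m \<sigma> - \<rho>"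
  have Mc: "M \<in> carrier_mat n n" unfolding M_def using sc rc by auto
  have Mh: "mat_adjoint M = M"
    using le psd_mat_hermitian unfolding loewner_le_def M_def by blast
  show "mat_adjoint \<sigma> = \<sigma>"
  proof (rule mat_adjoint_eqI[OF sc])
    fix i j assume i: "i < n" and j: "j < n"
    have "cnj (complex_of_real lam * \<sigma> $$ (j,i) - \<rho> $$ (j,i)) = complex_of_real lam * \<sigma> $$ (i,j) - \<rho> $$ (i,j)"
      using hermitian_cnj_index[OF Mc Mh i j] sc rc i j unfolding M_def by simp
    then show "cnj (\<sigma> $$ (j,i)) = \<sigma> $$ (i,j)" using lam hermitian_cnj_index[OF rc rh i j] by simp
  qed
qed

lemma loewner_le_smultD:
  assumes rho: "psd_mat n \<rho>" and le: "loewner_le n \<rho> (complex_of_real lam \<cdot>\<^sub>m \<sigma>)" and lam: "0 < lam"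
  shows "psd_mat n \<sigma>"
    and "Re (cinner n x (mat_app n \<rho> x)) \<le> lam * Re (cinner n x (mat_app n \<sigma> x))"
proof -
  have sc: "\<sigma> \<in> carrier_mat n n" and sh: "mat_adjoint \<sigma> = \<sigma>"
    using loewner_le_smult_hermitian[OF rho le] lam by auto
  have dom: "Re (cinner n y (mat_app n \<rho> y)) \<le> lam * Re (cinner n y (mat_app n \<sigma> y))" for y
    using le loewner_le_smult_iff[OF rho sc sh] by blast
  then show "Re (cinner n x (mat_app n \<rho> x)) \<le> lam * Re (cinner n x (mat_app n \<sigma> x))" .
  have "0 \<le> Re (cinner n y (mat_app n \<sigma> y))" for y
  proof -
    have "0 \<le> lam * Re (cinner n y (mat_app n \<sigma> y))"
      using psd_mat_cinner_nonneg[OF rho, of y] dom[of y] by linarith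
    thus ?thesis using lam by (simp add: zero_le_mult_iff)
  qed
  thus "psd_mat n \<sigma>" using psd_mat_iff_cinner[OF sc] sc sh unfolding hermitian_mat_def by auto
qed

lemma psd_mat_cinner_zero_kernel:
  assumes rho: "psd_mat n \<rho>" and z: "Re (cinner n z (mat_app n \<rho> z)) \<le> 0" and i: "i < n"
  shows "mat_app n \<rho> z i = 0"
proof -
  obtain Q r where Qd: "spectral_decomp n Q r \<rho>"
    using hermitian_spectral_decomp[OF psd_mat_carrier[OF rho] psd_mat_hermitian[OF rho]] by blast
  have r0: "r k \<ge> 0" if "k < n" for k using spectral_decomp_psd_nonneg[OF Qd rho that] .
  have "(\<Sum>k<n. r k * (cmod (cinner n (col_fn Q k) z))\<^sup>2) = 0"
    using spectral_decomp_quadratic_form[OF Qd, of z] z psd_mat_cinner_nonneg[OF rho, of z] by linarith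
  hence "\<forall>k\<in>{..<n}. r k * (cmod (cinner n (col_fn Q k) z))\<^sup>2 = 0"
    using r0 by (subst sum_nonneg_eq_0_iff[symmetric]) auto
  hence "complex_of_real (r k) * cinner n (col_fn Q k) z = 0" if "k < n" for k using that by auto
  hence "(\<Sum>k<n. Q $$ (i,k) * complex_of_real (r k) * cinner n (col_fn Q k) z) = 0"
    by (intro sum.neutral) (simp add: mult.assoc)
  thus ?thesis using spectral_decomp_mat_app[OF Qd i] by simp
qed

lemma loewner_le_smult_kernel:
  assumes rho: "psd_mat n \<rho>" and le: "loewner_le n \<rho> (complex_of_real lam \<cdot>\<^sub>m \<sigma>)" and lam: "0 < lam"
    and Vd: "spectral_decomp n V s \<sigma>" and j: "j < n" and sj: "s j = 0" and i: "i < n"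
  shows "mat_app n \<rho> (col_fn V j) i = 0"
proof -
  have "Re (cinner n (col_fn V j) (mat_app n \<sigma> (col_fn V j))) = 0"
    using spectral_decomp_cinner_col[OF Vd j] sj by simp
  hence "Re (cinner n (col_fn V j) (mat_app n \<rho> (col_fn V j))) \<le> 0"
    using loewner_le_smultD(2)[OF rho le lam, of "col_fn V j"] by simp
  thus ?thesis using psd_mat_cinner_zero_kernel[OF rho _ i] by blast
qed

lemma loewner_le_smult_range_subset:
  assumes rho: "psd_mat n \<rho>" and le: "loewner_le n \<rho> (complex_of_real lam \<cdot>\<^sub>m \<sigma>)" and lam: "0 < lam"
  shows "mat_range n \<rho> \<subseteq> mat_range n \<sigma>"
proof
  have rc: "\<rho> \<in> carrier_mat n n" using psd_mat_carrier[OF rho] .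
  have spsd: "psd_mat n \<sigma>" using loewner_le_smultD(1)[OF rho le lam] .
  have sc: "\<sigma> \<in> carrier_mat n n" using psd_mat_carrier[OF spsd] .
  obtain V s where Vd: "spectral_decomp n V s \<sigma>"
    using hermitian_spectral_decomp[OF sc psd_mat_hermitian[OF spsd]] by blast
  have v: "unitary_mat n V" using Vd unfolding spectral_decomp_def by auto
  have s0: "s j \<ge> 0" if "j < n" for j using spectral_decomp_psd_nonneg[OF Vd spsd that] .
  fix y assume "y \<in> mat_range n \<rho>"
  then obtain w where w: "w \<in> carrier_vec n" and y: "y = \<rho> *\<^sub>v w" unfolding mat_range_def by blast
  define rw where "rw = mat_app n \<rho> (\<lambda>j. w $ j)"
  define a where "a j = cinner n (col_fn V j) rw" for j
  have a0: "a j = 0" if j: "j < n" and sj: "s j = 0" for j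
  proof -
    have "a j = cinner n (mat_app n (mat_adjoint \<rho>) (col_fn V j)) (\<lambda>j. w $ j)"
      unfolding a_def rw_def using cinner_mat_app_adjoint[OF rc] by simp
    also have "\<dots> = cinner n (\<lambda>_. 0) (\<lambda>j. w $ j)"
      using loewner_le_smult_kernel[OF rho le lam Vd j sj] psd_mat_hermitian[OF rho] by (intro cinner_cong) auto
    finally show ?thesis by (simp add: cinner_def)
  qed
  (* u = \<sigma>\<^sup>+ \<rho> w; this works because \<rho> w has no component along the kernel of \<sigma> *)
  define u where "u = vec n (\<lambda>i. \<Sum>l<n. V $$ (i,l) * (if s l > 0 then a l / complex_of_real (s l) else 0))"
  have u: "u \<in> carrier_vec n" unfolding u_def by simp
  have "\<sigma> *\<^sub>v u = \<rho> *\<^sub>v w"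
  proof (rule eq_vecI)
    fix i assume "i < dim_vec (\<rho> *\<^sub>v w)"
    hence i: "i < n" using rc by simp
    have cinner_u: "cinner n (col_fn V k) (\<lambda>j. u $ j) = (if s k > 0 then a k / complex_of_real (s k) else 0)"
      if k: "k < n" for k
    proof -
      have "cinner n (col_fn V k) (\<lambda>j. u $ j)
          = cinner n (col_fn V k) (\<lambda>i. \<Sum>l<n. V $$ (i,l) * (if s l > 0 then a l / complex_of_real (s l) else 0))"
        by (intro cinner_cong) (auto simp: u_def)
      thus ?thesis using cinner_col_unitary_comb[OF v k] by simp
    qed
    have "(\<sigma> *\<^sub>v u) $ i = (\<Sum>k<n. V $$ (i,k) * complex_of_real (s k) * cinner n (col_fn V k) (\<lambda>j. u $ j))"
      using index_mult_mat_vec_mat_app[OF sc u i] spectral_decomp_mat_app[OF Vd i] by simp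
    also have "\<dots> = (\<Sum>k<n. V $$ (i,k) * a k)"
    proof (intro sum.cong refl)
      fix k assume "k \<in> {..<n}"
      hence k: "k < n" by simp
      show "V $$ (i,k) * complex_of_real (s k) * cinner n (col_fn V k) (\<lambda>j. u $ j) = V $$ (i,k) * a k"
        using cinner_u[OF k] a0[OF k] s0[OF k] by (cases "s k > 0") auto
    qed
    also have "\<dots> = rw i" using unitary_col_expansion[OF v i, of rw] by (simp add: a_def mult.commute)
    also have "\<dots> = (\<rho> *\<^sub>v w) $ i" unfolding rw_def using index_mult_mat_vec_mat_app[OF rc w i] by simp
    finally show "(\<sigma> *\<^sub>v u) $ i = (\<rho> *\<^sub>v w) $ i" .
  qed (use sc rc in auto)
  thus "y \<in> mat_range n \<sigma>" unfolding mat_range_def using u y by (metis (mono_tags, lifting) mem_Collect_eq)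
qed

section \<open>The sandwiched trace inequality\<close>

lemma powr_neg_ge_tangent:
  fixes r q :: real
  assumes "0 < r" "0 \<le> q"
  shows "1 + q - q * r \<le> r powr (- q)"
proof -
  have "q * (1 + ln r) \<le> q * r" using ln_le_minus_one[OF assms(1)] assms(2) by (intro mult_left_mono) auto
  hence "1 + q - q * r \<le> 1 + (- q * ln r)" by (simp add: algebra_simps)
  also have "\<dots> \<le> exp (- q * ln r)" by (rule exp_ge_add_one_self)
  also have "\<dots> = r powr (- q)" using assms(1) by (simp add: powr_def)
  finally show ?thesis .
qed

lemma weighted_sum_pos:
  fixes w t :: "'a \<Rightarrow> real"
  assumes J: "finite J" and w: "\<And>j. j \<in> J \<Longrightarrow> 0 \<le> w j" and w1: "(\<Sum>j\<in>J. w j) = 1"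
    and t: "\<And>j. j \<in> J \<Longrightarrow> 0 < t j"
  shows "0 < (\<Sum>j\<in>J. w j * t j)"
proof -
  obtain j0 where j0: "j0 \<in> J" "w j0 \<noteq> 0" using w1 by (metis sum.neutral zero_neq_one)
  have "0 < w j0 * t j0" using j0 w[of j0] t[of j0] by (simp add: order_le_less)
  thus ?thesis by (rule sum_pos2[OF J j0(1)]) (use w t in \<open>auto intro: mult_nonneg_nonneg less_imp_le\<close>)
qed

lemma powr_neg_jensen:
  fixes w t :: "'a \<Rightarrow> real" and q :: real
  assumes J: "finite J" and w: "\<And>j. j \<in> J \<Longrightarrow> 0 \<le> w j" and w1: "(\<Sum>j\<in>J. w j) = 1"
    and t: "\<And>j. j \<in> J \<Longrightarrow> 0 < t j" and q: "0 \<le> q"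
  shows "(\<Sum>j\<in>J. w j * t j) powr (- q) \<le> (\<Sum>j\<in>J. w j * t j powr (- q))"
proof -
  define H where "H = (\<Sum>j\<in>J. w j * t j)"
  have H: "0 < H" unfolding H_def by (rule weighted_sum_pos[OF J w w1 t])
  (* tangent line of the convex function t \<mapsto> t powr (- q) at H *)
  have tangent: "H powr (- q) * (1 + q - q * (t j / H)) \<le> t j powr (- q)" if "j \<in> J" for j
  proof -
    have "H powr (- q) * (1 + q - q * (t j / H)) \<le> H powr (- q) * (t j / H) powr (- q)"
      using powr_neg_ge_tangent[of "t j / H" q] t[OF that] H q by (intro mult_left_mono) auto
    also have "\<dots> = t j powr (- q)" using H t[OF that] by (simp add: powr_divide)
    finally show ?thesis .
  qed
  have summand: "w j * (H powr (- q) * (1 + q - q * (t j / H)))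
      = H powr (- q) * (1 + q) * w j - (H powr (- q) * q / H) * (w j * t j)" for j
    using H by (simp add: field_simps)
  have "H powr (- q) = H powr (- q) * (1 + q) * (\<Sum>j\<in>J. w j) - (H powr (- q) * q / H) * H"
    using w1 H by (simp add: field_simps)
  also have "\<dots> = (\<Sum>j\<in>J. H powr (- q) * (1 + q) * w j - (H powr (- q) * q / H) * (w j * t j))"
    unfolding sum_subtractf sum_distrib_left[symmetric] H_def ..
  also have "\<dots> = (\<Sum>j\<in>J. w j * (H powr (- q) * (1 + q - q * (t j / H))))"
    by (simp only: summand)
  also have "\<dots> \<le> (\<Sum>j\<in>J. w j * t j powr (- q))"
    using tangent w by (intro sum_mono mult_left_mono) auto
  finally show ?thesis unfolding H_def .
qed

lemma powr_squared: "((x :: real) powr a)\<^sup>2 = x powr (2 * a)"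
  by (cases "x = 0") (simp_all add: powr_power)

lemma sandwich_exponents:
  fixes s \<alpha> :: real
  assumes s: "0 \<le> s" and \<alpha>: "0 < \<alpha>"
  shows "s * (s powr ((1 - \<alpha>) / (2 * \<alpha>)))\<^sup>2 = s powr (1 / \<alpha>)"
    and "s powr ((\<alpha> - 1) / \<alpha>) * (s powr ((1 - \<alpha>) / (2 * \<alpha>)))\<^sup>2 \<le> 1"
proof -
  have e1: "1 + 2 * ((1 - \<alpha>) / (2 * \<alpha>)) = 1 / \<alpha>" and e2: "(\<alpha> - 1) / \<alpha> + 2 * ((1 - \<alpha>) / (2 * \<alpha>)) = 0"
    using \<alpha> by (simp_all add: field_simps)
  show "s * (s powr ((1 - \<alpha>) / (2 * \<alpha>)))\<^sup>2 = s powr (1 / \<alpha>)"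
    using powr_mult_base[OF s] e1 by (simp add: powr_squared)
  show "s powr ((\<alpha> - 1) / \<alpha>) * (s powr ((1 - \<alpha>) / (2 * \<alpha>)))\<^sup>2 \<le> 1"
    using e2 by (cases "s = 0") (simp_all add: powr_squared flip: powr_add)
qed

lemma rank_one_dominated_le:
  fixes V :: "complex mat" and s :: "nat \<Rightarrow> real" and w :: "nat \<Rightarrow> complex" and x lam \<beta> :: real
  assumes V: "unitary_mat n V" and s: "\<And>j. j < n \<Longrightarrow> 0 \<le> s j" and lam: "0 < lam"
    and dom: "\<And>y. x * (cmod (cinner n w y))\<^sup>2
      \<le> lam * (\<Sum>j<n. s j powr \<beta> * (cmod (cinner n (col_fn V j) y))\<^sup>2)"
  shows "x * (\<Sum>j\<in>{j \<in> {..<n}. 0 < s j}. (cmod (cinner n (col_fn V j) w))\<^sup>2 * s j powr (- \<beta>)) \<le> lam"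
proof -
  define c where "c j = cinner n (col_fn V j) w" for j
  define wt where "wt j = (cmod (c j))\<^sup>2" for j
  define J where "J = {j \<in> {..<n}. 0 < s j}"
  define h where "h j = (if 0 < s j then s j powr (- \<beta>) else 0)" for j
  define H where "H = (\<Sum>j\<in>J. wt j * s j powr (- \<beta>))"
  have H: "0 \<le> H" unfolding H_def wt_def by (intro sum_nonneg) simp
  have h_wt: "(\<Sum>j<n. h j * wt j) = H"
    unfolding H_def J_def by (intro sum.mono_neutral_cong_right) (auto simp: h_def)
  (* the test vector sigma^(-beta) w on the support of sigma = \<Sum>j. s j v\<^sub>j v\<^sub>j\<^sup>*, in the basis V *)
  define y where "y i = (\<Sum>l<n. V $$ (i,l) * (complex_of_real (h l) * c l))" for i
  have cinner_V_y: "cinner n (col_fn V j) y = complex_of_real (h j) * c j" if "j < n" for j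
    unfolding y_def using cinner_col_unitary_comb[OF V that] .
  have cinner_w_y: "cinner n w y = complex_of_real H"
  proof -
    have "cinner n w y = (\<Sum>l<n. (complex_of_real (h l) * c l) * cinner n w (col_fn V l))"
      unfolding y_def by (rule cinner_unitary_comb)
    also have "\<dots> = (\<Sum>l<n. complex_of_real (h l * wt l))"
    proof (intro sum.cong refl)
      fix l
      have "c l * cinner n w (col_fn V l) = complex_of_real (wt l)"
        unfolding wt_def c_def cinner_cnj[of n "col_fn V l" w, symmetric] by (simp only: complex_norm_square)
      thus "(complex_of_real (h l) * c l) * cinner n w (col_fn V l) = complex_of_real (h l * wt l)"
        by (simp add: mult.assoc)
    qed
    also have "\<dots> = complex_of_real (\<Sum>l<n. h l * wt l)" by simp
    finally show ?thesis unfolding h_wt .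
  qed
  have weight_y: "s j powr \<beta> * (cmod (cinner n (col_fn V j) y))\<^sup>2 = h j * wt j" if "j < n" for j
  proof (cases "0 < s j")
    case True
    have "\<beta> + 2 * (- \<beta>) = - \<beta>" by simp
    hence "s j powr \<beta> * (h j)\<^sup>2 = h j" using True unfolding h_def by (simp add: powr_squared flip: powr_add)
    thus ?thesis unfolding cinner_V_y[OF that] wt_def by (simp add: norm_mult power_mult_distrib)
  next
    case False
    thus ?thesis using s[OF that] by (simp add: h_def)
  qed
  have "x * H\<^sup>2 = x * (cmod (cinner n w y))\<^sup>2" using cinner_w_y by simp
  also have "\<dots> \<le> lam * (\<Sum>j<n. s j powr \<beta> * (cmod (cinner n (col_fn V j) y))\<^sup>2)" by (rule dom)
  also have "\<dots> = lam * H" using weight_y h_wt by simp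
  finally have "x * H\<^sup>2 \<le> lam * H" .
  hence "x * H \<le> lam" using H lam by (cases "H = 0") (auto simp: power2_eq_square)
  thus ?thesis unfolding H_def J_def wt_def c_def .
qed

lemma rank_one_dominated_powr_le:
  fixes V :: "complex mat" and s :: "nat \<Rightarrow> real" and w :: "nat \<Rightarrow> complex" and x lam \<alpha> :: real
  assumes V: "unitary_mat n V" and w: "cinner n w w = 1" and s: "\<And>j. j < n \<Longrightarrow> 0 \<le> s j"
    and x: "0 \<le> x" and lam: "0 < lam" and \<alpha>: "1 < \<alpha>"
    and supp: "\<And>j. 0 < x \<Longrightarrow> j < n \<Longrightarrow> s j = 0 \<Longrightarrow> cinner n (col_fn V j) w = 0"
    and dom: "\<And>y. x * (cmod (cinner n w y))\<^sup>2
      \<le> lam * (\<Sum>j<n. s j powr (1 / \<alpha>) * (cmod (cinner n (col_fn V j) y))\<^sup>2)"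
  shows "x powr \<alpha> \<le> lam powr (\<alpha> - 1) * x * (\<Sum>j<n. (cmod (cinner n (col_fn V j) w))\<^sup>2 * s j powr ((\<alpha> - 1) / \<alpha>))"
proof (cases "x = 0")
  case True
  thus ?thesis by simp
next
  case False
  hence x_pos: "0 < x" using x by simp
  define q where "q = \<alpha> - 1"
  define wt where "wt j = (cmod (cinner n (col_fn V j) w))\<^sup>2" for j
  define J where "J = {j \<in> {..<n}. 0 < s j}"
  define t where "t j = s j powr (- (1 / \<alpha>))" for j
  define H where "H = (\<Sum>j\<in>J. wt j * t j)"
  have q: "0 < q" using \<alpha> q_def by simp
  have J: "finite J" "J \<subseteq> {..<n}" unfolding J_def by auto
  have outside_J: "wt j = 0" "s j = 0" if "j < n" "j \<notin> J" for j
    using that s[of j] supp[OF x_pos, of j] unfolding J_def wt_def by auto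
  have t_pos: "0 < t j" if "j \<in> J" for j using that unfolding J_def t_def by auto
  have wt_sum: "(\<Sum>j\<in>J. wt j) = 1"
  proof -
    have "1 = (\<Sum>j<n. cnj (cinner n (col_fn V j) w) * cinner n (col_fn V j) w)"
      using unitary_parseval[OF V, of w w] w by simp
    also have "\<dots> = complex_of_real (\<Sum>j<n. wt j)"
      unfolding wt_def of_real_sum by (intro sum.cong refl) (simp only: complex_norm_square mult.commute)
    also have "(\<Sum>j<n. wt j) = (\<Sum>j\<in>J. wt j)" using J outside_J by (intro sum.mono_neutral_right) auto
    finally show ?thesis by (metis of_real_eq_1_iff)
  qed
  have H_pos: "0 < H"
    unfolding H_def by (rule weighted_sum_pos[OF J(1) _ wt_sum t_pos]) (simp add: wt_def)
  have "x * H \<le> lam"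
    using rank_one_dominated_le[OF V s lam dom] unfolding H_def J_def wt_def t_def .
  hence x_le: "x \<le> lam / H" using H_pos by (simp add: pos_le_divide_eq)
  have t_powr: "wt j * t j powr (- q) = wt j * s j powr ((\<alpha> - 1) / \<alpha>)" if "j \<in> J" for j
  proof -
    have "- (1 / \<alpha>) * - q = (\<alpha> - 1) / \<alpha>" using \<alpha> q_def by (simp add: field_simps)
    thus ?thesis unfolding t_def by (simp only: powr_powr)
  qed
  have "x powr \<alpha> = x * x powr q" using powr_mult_base[OF x] q_def by simp
  also have "\<dots> \<le> x * (lam / H) powr q" using x_le x q by (intro mult_left_mono powr_mono2) auto
  also have "\<dots> = lam powr q * x * H powr (- q)" using lam H_pos by (simp add: powr_divide powr_minus_divide)
  also have "\<dots> \<le> lam powr q * x * (\<Sum>j\<in>J. wt j * t j powr (- q))"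
    unfolding H_def using powr_neg_jensen[OF J(1) _ wt_sum t_pos, where q = q] q x
    by (intro mult_left_mono) (auto simp: wt_def)
  also have "(\<Sum>j\<in>J. wt j * t j powr (- q)) = (\<Sum>j<n. wt j * s j powr ((\<alpha> - 1) / \<alpha>))"
    using J outside_J t_powr by (intro sum.mono_neutral_cong_left) auto
  finally show ?thesis unfolding wt_def q_def .
qed

lemma mat_app_cong: "(\<And>i. i < n \<Longrightarrow> z i = z' i) \<Longrightarrow> mat_app n A z = mat_app n A z'"
  unfolding mat_app_def by (intro ext sum.cong) auto

lemma mat_app_sandwich:
  assumes "S \<in> carrier_mat n n" "\<rho> \<in> carrier_mat n n" "i < n"
  shows "mat_app n (S * \<rho> * S) y i = mat_app n S (mat_app n \<rho> (mat_app n S y)) i"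
proof -
  have "mat_app n (S * \<rho> * S) y i = mat_app n (S * \<rho>) (mat_app n S y) i"
    using assms by (intro mat_app_mult) auto
  also have "\<dots> = mat_app n S (mat_app n \<rho> (mat_app n S y)) i"
    using assms by (intro mat_app_mult) auto
  finally show ?thesis .
qed

lemma cinner_sandwich:
  assumes Sc: "S \<in> carrier_mat n n" and Sh: "mat_adjoint S = S" and rc: "\<rho> \<in> carrier_mat n n"
  shows "cinner n y (mat_app n (S * \<rho> * S) y) = cinner n (mat_app n S y) (mat_app n \<rho> (mat_app n S y))"
proof -
  have "cinner n y (mat_app n (S * \<rho> * S) y) = cinner n y (mat_app n S (mat_app n \<rho> (mat_app n S y)))"
    using mat_app_sandwich[OF Sc rc] by (intro cinner_cong) auto
  also have "\<dots> = cinner n (mat_app n (mat_adjoint S) y) (mat_app n \<rho> (mat_app n S y))"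
    using cinner_mat_app_adjoint[OF Sc] .
  finally show ?thesis using Sh by simp
qed

lemma psd_mat_sandwich:
  assumes rho: "psd_mat n \<rho>" and Sc: "S \<in> carrier_mat n n" and Sh: "mat_adjoint S = S"
  shows "psd_mat n (S * \<rho> * S)"
proof -
  have rc: "\<rho> \<in> carrier_mat n n" using psd_mat_carrier[OF rho] .
  have Xc: "S * \<rho> * S \<in> carrier_mat n n" using Sc rc by auto
  have "mat_adjoint (S * \<rho> * S) = mat_adjoint S * mat_adjoint (S * \<rho>)"
    using Sc rc by (intro mat_adjoint_mult[of _ n n _ n]) auto
  also have "mat_adjoint (S * \<rho>) = mat_adjoint \<rho> * mat_adjoint S"
    using Sc rc by (intro mat_adjoint_mult[of _ n n _ n]) auto
  finally have "mat_adjoint (S * \<rho> * S) = S * \<rho> * S"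
    using Sh psd_mat_hermitian[OF rho] Sc rc by (simp add: assoc_mult_mat[of _ n n _ n _ n])
  thus ?thesis using psd_mat_iff_cinner[OF Xc] Xc cinner_sandwich[OF Sc Sh rc] psd_mat_cinner_nonneg[OF rho]
    unfolding hermitian_mat_def by auto
qed

lemma cinner_sandwich_kernel:
  assumes Sd: "spectral_decomp n V f S" and rc: "\<rho> \<in> carrier_mat n n" and j: "j < n" and fj: "f j = 0"
  shows "cinner n (col_fn V j) (mat_app n (S * \<rho> * S) y) = 0"
proof -
  have Sc: "S \<in> carrier_mat n n" using spectral_decomp_carrier[OF Sd] .
  have "cinner n (col_fn V j) (mat_app n (S * \<rho> * S) y)
      = cinner n (col_fn V j) (mat_app n S (mat_app n \<rho> (mat_app n S y)))"
    using mat_app_sandwich[OF Sc rc] by (intro cinner_cong) auto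
  thus ?thesis using spectral_decomp_cinner_col[OF Sd j] fj by simp
qed

lemma cinner_sandwich_eigenvector:
  assumes Sd: "spectral_decomp n V f S" and rc: "\<rho> \<in> carrier_mat n n" and j: "j < n"
  shows "cinner n (col_fn V j) (mat_app n (S * \<rho> * S) (col_fn V j))
    = complex_of_real ((f j)\<^sup>2) * cinner n (col_fn V j) (mat_app n \<rho> (col_fn V j))"
proof -
  have Sc: "S \<in> carrier_mat n n" and Sh: "mat_adjoint S = S"
    using spectral_decomp_carrier[OF Sd] spectral_decomp_hermitian[OF Sd] .
  have S_V: "mat_app n S (col_fn V j) i = complex_of_real (f j) * col_fn V j i" if "i < n" for i
    using spectral_decomp_eigenvector[OF Sd j that] by (simp add: col_fn_def)
  hence "mat_app n \<rho> (mat_app n S (col_fn V j)) = mat_app n \<rho> (\<lambda>i. complex_of_real (f j) * col_fn V j i)"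
    by (intro mat_app_cong) auto
  hence "cinner n (col_fn V j) (mat_app n (S * \<rho> * S) (col_fn V j))
      = cinner n (\<lambda>i. complex_of_real (f j) * col_fn V j i) (\<lambda>i. complex_of_real (f j) * mat_app n \<rho> (col_fn V j) i)"
    unfolding cinner_sandwich[OF Sc Sh rc] using S_V by (intro cinner_cong) (auto simp: mat_app_scale)
  thus ?thesis by (simp add: cinner_scale_left cinner_scale_right power2_eq_square)
qed

lemma sandwich_quadratic_form_le:
  fixes \<rho> \<sigma> :: "complex mat" and lam \<alpha> :: real
  assumes rho: "psd_mat n \<rho>" and le: "loewner_le n \<rho> (complex_of_real lam \<cdot>\<^sub>m \<sigma>)" and lam: "0 < lam"
    and Vd: "spectral_decomp n V s \<sigma>" and s: "\<And>j. j < n \<Longrightarrow> 0 \<le> s j" and \<alpha>: "0 < \<alpha>"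
  defines "S \<equiv> mat_fun n (\<lambda>t. t powr ((1 - \<alpha>) / (2 * \<alpha>))) \<sigma>"
  shows "Re (cinner n y (mat_app n (S * \<rho> * S) y))
    \<le> lam * (\<Sum>j<n. s j powr (1 / \<alpha>) * (cmod (cinner n (col_fn V j) y))\<^sup>2)"
proof -
  define g where "g t = t powr ((1 - \<alpha>) / (2 * \<alpha>))" for t :: real
  have Sd: "spectral_decomp n V (g \<circ> s) S" unfolding S_def g_def by (rule spectral_decomp_mat_fun[OF Vd])
  have Sc: "S \<in> carrier_mat n n" and Sh: "mat_adjoint S = S"
    using spectral_decomp_carrier[OF Sd] spectral_decomp_hermitian[OF Sd] .
  have "Re (cinner n y (mat_app n (S * \<rho> * S) y)) = Re (cinner n (mat_app n S y) (mat_app n \<rho> (mat_app n S y)))"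
    using cinner_sandwich[OF Sc Sh psd_mat_carrier[OF rho]] by simp
  also have "\<dots> \<le> lam * Re (cinner n (mat_app n S y) (mat_app n \<sigma> (mat_app n S y)))"
    by (rule loewner_le_smultD(2)[OF rho le lam])
  also have "\<dots> = lam * (\<Sum>j<n. s j * (g (s j))\<^sup>2 * (cmod (cinner n (col_fn V j) y))\<^sup>2)"
    using spectral_decomp_quadratic_form[OF Vd] spectral_decomp_cinner_col[OF Sd]
    by (simp add: norm_mult power_mult_distrib mult.assoc)
  also have "\<dots> = lam * (\<Sum>j<n. s j powr (1 / \<alpha>) * (cmod (cinner n (col_fn V j) y))\<^sup>2)"
    using sandwich_exponents(1) s \<alpha> unfolding g_def by simp
  finally show ?thesis .
qed

lemma sandwich_eigenvalue_powr_le: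
  fixes n :: nat and \<rho> \<sigma> :: "complex mat" and lam \<alpha> :: real
  defines "S \<equiv> mat_fun n (\<lambda>t. t powr ((1 - \<alpha>) / (2 * \<alpha>))) \<sigma>"
  assumes rho: "psd_mat n \<rho>" and le: "loewner_le n \<rho> (complex_of_real lam \<cdot>\<^sub>m \<sigma>)"
    and lam: "0 < lam" and \<alpha>: "1 < \<alpha>"
    and Vd: "spectral_decomp n V s \<sigma>" and s: "\<And>j. j < n \<Longrightarrow> 0 \<le> s j"
    and Wd: "spectral_decomp n W x (S * \<rho> * S)" and x: "\<And>k. k < n \<Longrightarrow> 0 \<le> x k" and k: "k < n"
  shows "x k powr \<alpha>
    \<le> lam powr (\<alpha> - 1) * x k * (\<Sum>j<n. (cmod (cinner n (col_fn V j) (col_fn W k)))\<^sup>2 * s j powr ((\<alpha> - 1) / \<alpha>))"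
proof (rule rank_one_dominated_powr_le[OF _ _ s x[OF k] lam \<alpha>])
  show "unitary_mat n V" using Vd unfolding spectral_decomp_def by auto
  have W: "unitary_mat n W" using Wd unfolding spectral_decomp_def by auto
  show "cinner n (col_fn W k) (col_fn W k) = 1" using unitary_col_orthonormal[OF W k k] by simp
  show "cinner n (col_fn V j) (col_fn W k) = 0" if "0 < x k" "j < n" "s j = 0" for j
  proof -
    have Sd: "spectral_decomp n V ((\<lambda>t. t powr ((1 - \<alpha>) / (2 * \<alpha>))) \<circ> s) S"
      unfolding S_def by (rule spectral_decomp_mat_fun[OF Vd])
    have "complex_of_real (x k) * cinner n (col_fn V j) (col_fn W k)
        = cinner n (col_fn V j) (mat_app n (S * \<rho> * S) (col_fn W k))"
      using spectral_decomp_cinner_eigenvector[OF Wd k] by simp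
    also have "\<dots> = 0"
      using cinner_sandwich_kernel[OF Sd psd_mat_carrier[OF rho] \<open>j < n\<close>] \<open>s j = 0\<close> by simp
    finally show ?thesis using \<open>0 < x k\<close> by simp
  qed
  (* S \<rho> S \<le> lam S \<sigma> S = lam \<sigma>\<^bsup>1/\<alpha>\<^esup> on the support of \<sigma>, tested on the eigenvectors of S \<rho> S *)
  show "x k * (cmod (cinner n (col_fn W k) y))\<^sup>2
      \<le> lam * (\<Sum>j<n. s j powr (1 / \<alpha>) * (cmod (cinner n (col_fn V j) y))\<^sup>2)" for y
  proof -
    have "x k * (cmod (cinner n (col_fn W k) y))\<^sup>2 \<le> (\<Sum>l<n. x l * (cmod (cinner n (col_fn W l) y))\<^sup>2)"
      using k x by (intro member_le_sum) auto
    also have "\<dots> = Re (cinner n y (mat_app n (S * \<rho> * S) y))"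
      using spectral_decomp_quadratic_form[OF Wd] by simp
    also have "\<dots> \<le> lam * (\<Sum>j<n. s j powr (1 / \<alpha>) * (cmod (cinner n (col_fn V j) y))\<^sup>2)"
      unfolding S_def using sandwich_quadratic_form_le[OF rho le lam Vd s] \<alpha> by simp
    finally show ?thesis .
  qed
qed

theorem sandwiched_trace_le:
  fixes \<rho> \<sigma> :: "complex mat" and lam \<alpha> :: real
  assumes rho: "psd_mat n \<rho>" and le: "loewner_le n \<rho> (complex_of_real lam \<cdot>\<^sub>m \<sigma>)"
    and lam: "0 < lam" and \<alpha>: "1 < \<alpha>"
  defines "S \<equiv> mat_fun n (\<lambda>t. t powr ((1 - \<alpha>) / (2 * \<alpha>))) \<sigma>"
  shows "0 \<le> Re (mat_trace (mat_fun n (\<lambda>t. t powr \<alpha>) (S * \<rho> * S)))"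
    and "Re (mat_trace (mat_fun n (\<lambda>t. t powr \<alpha>) (S * \<rho> * S))) \<le> lam powr (\<alpha> - 1) * Re (mat_trace \<rho>)"
proof -
  define g where "g t = t powr ((1 - \<alpha>) / (2 * \<alpha>))" for t :: real
  define X where "X = S * \<rho> * S"
  have rc: "\<rho> \<in> carrier_mat n n" using psd_mat_carrier[OF rho] .
  have spsd: "psd_mat n \<sigma>" using loewner_le_smultD(1)[OF rho le lam] .
  obtain V s where Vd: "spectral_decomp n V s \<sigma>"
    using hermitian_spectral_decomp[OF psd_mat_carrier[OF spsd] psd_mat_hermitian[OF spsd]] by blast
  have V: "unitary_mat n V" using Vd unfolding spectral_decomp_def by auto
  have s0: "0 \<le> s j" if "j < n" for j using spectral_decomp_psd_nonneg[OF Vd spsd that] .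
  have Sd: "spectral_decomp n V (g \<circ> s) S" unfolding S_def g_def by (rule spectral_decomp_mat_fun[OF Vd])
  have Sc: "S \<in> carrier_mat n n" and Sh: "mat_adjoint S = S"
    using spectral_decomp_carrier[OF Sd] spectral_decomp_hermitian[OF Sd] .
  have Xpsd: "psd_mat n X" unfolding X_def by (rule psd_mat_sandwich[OF rho Sc Sh])
  obtain W x where Wd: "spectral_decomp n W x X"
    using hermitian_spectral_decomp[OF psd_mat_carrier[OF Xpsd] psd_mat_hermitian[OF Xpsd]] by blast
  have x0: "0 \<le> x k" if "k < n" for k using spectral_decomp_psd_nonneg[OF Wd Xpsd that] .
  have trace_X: "Re (mat_trace (mat_fun n (\<lambda>t. t powr \<alpha>) X)) = (\<Sum>k<n. x k powr \<alpha>)"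
    using spectral_decomp_trace[OF spectral_decomp_mat_fun[OF Wd]] by simp
  then show "0 \<le> Re (mat_trace (mat_fun n (\<lambda>t. t powr \<alpha>) (S * \<rho> * S)))"
    unfolding X_def by (simp add: sum_nonneg)
  define wt where "wt k j = (cmod (cinner n (col_fn V j) (col_fn W k)))\<^sup>2" for k j
  define r where "r j = Re (cinner n (col_fn V j) (mat_app n \<rho> (col_fn V j)))" for j
  have eigenvalue_bound: "x k powr \<alpha> \<le> lam powr (\<alpha> - 1) * x k * (\<Sum>j<n. wt k j * s j powr ((\<alpha> - 1) / \<alpha>))"
    if "k < n" for k
    unfolding wt_def using sandwich_eigenvalue_powr_le[OF rho le lam \<alpha> Vd s0 Wd[unfolded X_def S_def] x0 that]
    unfolding S_def .
  have diag_X: "(\<Sum>k<n. x k * wt k j) = (g (s j))\<^sup>2 * r j" if j: "j < n" for j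
  proof -
    have "(\<Sum>k<n. x k * wt k j) = Re (cinner n (col_fn V j) (mat_app n X (col_fn V j)))"
      unfolding spectral_decomp_quadratic_form[OF Wd] wt_def
      by (intro sum.cong refl) (simp add: cinner_cnj[of n "col_fn W _" "col_fn V j", symmetric])
    also have "\<dots> = (g (s j))\<^sup>2 * r j"
      unfolding X_def r_def using cinner_sandwich_eigenvector[OF Sd rc j] by simp
    finally show ?thesis .
  qed
  have "Re (mat_trace (mat_fun n (\<lambda>t. t powr \<alpha>) X))
      \<le> (\<Sum>k<n. lam powr (\<alpha> - 1) * x k * (\<Sum>j<n. wt k j * s j powr ((\<alpha> - 1) / \<alpha>)))"
    unfolding trace_X using eigenvalue_bound by (intro sum_mono) auto
  also have "\<dots> = (\<Sum>k<n. \<Sum>j<n. lam powr (\<alpha> - 1) * (s j powr ((\<alpha> - 1) / \<alpha>) * (x k * wt k j)))"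
    by (simp add: sum_distrib_left mult_ac)
  also have "\<dots> = lam powr (\<alpha> - 1) * (\<Sum>j<n. s j powr ((\<alpha> - 1) / \<alpha>) * (\<Sum>k<n. x k * wt k j))"
    by (subst sum.swap) (simp add: sum_distrib_left)
  also have "\<dots> = lam powr (\<alpha> - 1) * (\<Sum>j<n. (s j powr ((\<alpha> - 1) / \<alpha>) * (g (s j))\<^sup>2) * r j)"
    using diag_X by (simp add: mult.assoc)
  also have "\<dots> \<le> lam powr (\<alpha> - 1) * (\<Sum>j<n. r j)"
    using sandwich_exponents(2) s0 \<alpha> psd_mat_cinner_nonneg[OF rho] unfolding g_def r_def
    by (intro mult_left_mono sum_mono mult_left_le_one_le) auto
  also have "(\<Sum>j<n. r j) = Re (mat_trace \<rho>)"
    using mat_trace_unitary_basis[OF V rc] unfolding r_def by (simp flip: Re_sum)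
  finally show "Re (mat_trace (mat_fun n (\<lambda>t. t powr \<alpha>) (S * \<rho> * S))) \<le> lam powr (\<alpha> - 1) * Re (mat_trace \<rho>)"
    unfolding X_def .
qed

lemma psd_mat_trace_nonneg:
  assumes "psd_mat n A"
  shows "0 \<le> Re (mat_trace A)"
proof -
  obtain U d where D: "spectral_decomp n U d A"
    using hermitian_spectral_decomp[OF psd_mat_carrier[OF assms] psd_mat_hermitian[OF assms]] by blast
  show ?thesis using spectral_decomp_trace[OF D] spectral_decomp_psd_nonneg[OF D assms] by (auto intro!: sum_nonneg)
qed

(* Since log 2 0 = 0, a vanishing ratio of traces gives the value 2 powr 0 = 1; hence 1 \<le> lam. *)
theorem renyi_D_le_of_loewner_le:
  assumes rho: "psd_mat n \<rho>" and le: "loewner_le n \<rho> (complex_of_real lam \<cdot>\<^sub>m \<sigma>)"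
    and lam: "1 \<le> lam" and \<alpha>: "1 \<le> \<alpha>"
  shows "renyi_D n \<alpha> \<rho> \<sigma> \<noteq> \<infinity> \<and> 2 powr ((\<alpha> - 1) * real_of_ereal (renyi_D n \<alpha> \<rho> \<sigma>)) \<le> lam powr (\<alpha> - 1)"
proof -
  have range: "mat_range n \<rho> \<subseteq> mat_range n \<sigma>" using loewner_le_smult_range_subset[OF rho le] lam by simp
  show ?thesis
  proof (cases "\<alpha> = 1")
    case True
    thus ?thesis using range lam by (simp add: renyi_D_def umegaki_D_def)
  next
    case False
    hence \<alpha>1: "1 < \<alpha>" using \<alpha> by simp
    define S where "S = mat_fun n (\<lambda>t. t powr ((1 - \<alpha>) / (2 * \<alpha>))) \<sigma>"
    define T where "T = Re (mat_trace (mat_fun n (\<lambda>t. t powr \<alpha>) (S * \<rho> * S)))"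
    define r where "r = T / Re (mat_trace \<rho>)"
    have D: "renyi_D n \<alpha> \<rho> \<sigma> = ereal (1 / (\<alpha> - 1) * log 2 r)"
      using False range unfolding renyi_D_def sandwiched_D_def r_def T_def S_def Let_def by simp
    have T: "0 \<le> T" "T \<le> lam powr (\<alpha> - 1) * Re (mat_trace \<rho>)"
      unfolding T_def S_def using sandwiched_trace_le[OF rho le _ \<alpha>1] lam by auto
    have tr: "0 \<le> Re (mat_trace \<rho>)" using psd_mat_trace_nonneg[OF rho] .
    have r: "0 \<le> r \<and> r \<le> lam powr (\<alpha> - 1)"
    proof (cases "Re (mat_trace \<rho>) = 0")
      case True
      thus ?thesis unfolding r_def by simp
    next
      case False
      hence "0 < Re (mat_trace \<rho>)" using tr by simp
      thus ?thesis using T unfolding r_def by (simp add: pos_divide_le_eq)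
    qed
    have one: "1 \<le> lam powr (\<alpha> - 1)" using lam \<alpha>1 by (simp add: ge_one_powr_ge_zero)
    have "2 powr ((\<alpha> - 1) * real_of_ereal (renyi_D n \<alpha> \<rho> \<sigma>)) = 2 powr (log 2 r)" using D \<alpha>1 by simp
    also have "\<dots> \<le> lam powr (\<alpha> - 1)"
    proof (cases "r = 0")
      case True
      thus ?thesis using one by (simp add: log_def)
    next
      case False
      thus ?thesis using r by simp
    qed
    finally show ?thesis using D by simp
  qed
qed

lemma max_D_le_of_loewner_le:
  assumes "loewner_le n \<rho> (complex_of_real lam \<cdot>\<^sub>m \<sigma>)" "0 < lam"
  shows "max_D n \<rho> \<sigma> \<le> ereal (log 2 lam)"
  unfolding max_D_def by (rule Inf_lower) (use assms in auto)

section \<open>Classical-quantum states\<close>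

lemma sum_lessThan_mult_blocks:
  fixes f :: "nat \<Rightarrow> 'a::comm_monoid_add"
  shows "(\<Sum>I<nB * nE. f I) = (\<Sum>b<nB. \<Sum>i<nE. f (b * nE + i))"
proof -
  have "(\<Sum>I<nB * nE. f I) = (\<Sum>b<nB. sum f {b * nE..<b * nE + nE})" using sum.nat_group[of f nE nB] by simp
  also have "\<dots> = (\<Sum>b<nB. \<Sum>i<nE. f (b * nE + i))"
  proof (rule sum.cong[OF refl])
    fix b
    have "sum f {0 + b * nE..<nE + b * nE} = sum (\<lambda>i. f (i + b * nE)) {0..<nE}" by (rule sum.shift_bounds_nat_ivl)
    thus "sum f {b * nE..<b * nE + nE} = (\<Sum>i<nE. f (b * nE + i))" by (simp add: atLeast0LessThan add.commute)
  qed
  finally show ?thesis .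
qed

lemma block_index_less: "b < nB \<Longrightarrow> i < nE \<Longrightarrow> b * nE + i < nB * (nE :: nat)"
proof -
  assume "b < nB" "i < nE"
  hence "b * nE + i < Suc b * nE" by simp
  also have "\<dots> \<le> nB * nE" using \<open>b < nB\<close> by (intro mult_le_mono1) simp
  finally show ?thesis .
qed

lemma cinner_block_diagonal:
  assumes M: "\<And>I J. I < nB * nE \<Longrightarrow> J < nB * nE \<Longrightarrow>
    M $$ (I,J) = (if I div nE = J div nE then F (I div nE) $$ (I mod nE, J mod nE) else 0)"
  shows "cinner (nB * nE) x (mat_app (nB * nE) M x)
    = (\<Sum>b<nB. cinner nE (\<lambda>i. x (b * nE + i)) (mat_app nE (F b) (\<lambda>i. x (b * nE + i))))"
proof -
  have block: "mat_app (nB * nE) M x (b * nE + i) = mat_app nE (F b) (\<lambda>i. x (b * nE + i)) i"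
    if b: "b < nB" and i: "i < nE" for b i
  proof -
    have "mat_app (nB * nE) M x (b * nE + i) = (\<Sum>b'<nB. \<Sum>j<nE. M $$ (b * nE + i, b' * nE + j) * x (b' * nE + j))"
      unfolding mat_app_def by (rule sum_lessThan_mult_blocks)
    also have "\<dots> = (\<Sum>b'<nB. if b' = b then \<Sum>j<nE. F b $$ (i,j) * x (b * nE + j) else 0)"
      using M block_index_less[OF b i] block_index_less i by (intro sum.cong refl) auto
    also have "\<dots> = (\<Sum>j<nE. F b $$ (i,j) * x (b * nE + j))" using b by simp
    finally show ?thesis unfolding mat_app_def .
  qed
  have "cinner (nB * nE) x (mat_app (nB * nE) M x)
      = (\<Sum>b<nB. \<Sum>i<nE. cnj (x (b * nE + i)) * mat_app (nB * nE) M x (b * nE + i))"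
    unfolding cinner_def by (rule sum_lessThan_mult_blocks)
  also have "\<dots> = (\<Sum>b<nB. cinner nE (\<lambda>i. x (b * nE + i)) (mat_app nE (F b) (\<lambda>i. x (b * nE + i))))"
    unfolding cinner_def using block by (intro sum.cong refl) auto
  finally show ?thesis .
qed

lemma cinner_cq_mat:
  "cinner (nB * nE) x (mat_app (nB * nE) (cq_mat nB nE \<omega>) x)
    = (\<Sum>b<nB. cinner nE (\<lambda>i. x (b * nE + i)) (mat_app nE (\<omega> b) (\<lambda>i. x (b * nE + i))))"
  by (rule cinner_block_diagonal) (simp add: cq_mat_def)

lemma index_kron_one:
  assumes "E \<in> carrier_mat nE nE" "I < nB * nE" "J < nB * nE"
  shows "kron (1\<^sub>m nB) E $$ (I,J) = (if I div nE = J div nE then E $$ (I mod nE, J mod nE) else 0)"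
  using assms by (simp add: kron_def less_mult_imp_div_less)

lemma kron_one_hermitian:
  assumes Ec: "E \<in> carrier_mat nE nE" and Eh: "mat_adjoint E = E"
  shows "kron (1\<^sub>m nB) E \<in> carrier_mat (nB * nE) (nB * nE)" "mat_adjoint (kron (1\<^sub>m nB) E) = kron (1\<^sub>m nB) E"
proof -
  show Kc: "kron (1\<^sub>m nB) E \<in> carrier_mat (nB * nE) (nB * nE)" unfolding kron_def using Ec by simp
  show "mat_adjoint (kron (1\<^sub>m nB) E) = kron (1\<^sub>m nB) E"
  proof (rule mat_adjoint_eqI[OF Kc])
    fix I J assume I: "I < nB * nE" and J: "J < nB * nE"
    hence "0 < nE" by (cases nE) auto
    thus "cnj (kron (1\<^sub>m nB) E $$ (J,I)) = kron (1\<^sub>m nB) E $$ (I,J)"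
      using index_kron_one[OF Ec I J] index_kron_one[OF Ec J I] hermitian_cnj_index[OF Ec Eh] by simp
  qed
qed

lemma cinner_kron_one:
  assumes "E \<in> carrier_mat nE nE"
  shows "cinner (nB * nE) x (mat_app (nB * nE) (kron (1\<^sub>m nB) E) x)
    = (\<Sum>b<nB. cinner nE (\<lambda>i. x (b * nE + i)) (mat_app nE E (\<lambda>i. x (b * nE + i))))"
  by (rule cinner_block_diagonal[where F = "\<lambda>_. E"]) (simp add: index_kron_one[OF assms])

lemma ptrace_B_hermitian:
  assumes "M \<in> carrier_mat (nB * nE) (nB * nE)" "mat_adjoint M = M" "i < nE" "j < nE"
  shows "cnj (ptrace_B nB nE M $$ (j,i)) = ptrace_B nB nE M $$ (i,j)"
  using assms(3,4) hermitian_cnj_index[OF assms(1,2) block_index_less block_index_less]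
  by (simp add: ptrace_B_def)

lemma index_ptrace_B_cq_mat:
  "i < nE \<Longrightarrow> j < nE \<Longrightarrow> ptrace_B nB nE (cq_mat nB nE \<omega>) $$ (i,j) = (\<Sum>b<nB. \<omega> b $$ (i,j))"
  by (auto simp: ptrace_B_def cq_mat_def block_index_less intro!: sum.cong)

lemma cinner_mat_app_linear:
  assumes "finite A" "\<And>i j. i < n \<Longrightarrow> j < n \<Longrightarrow> M $$ (i,j) = (\<Sum>a\<in>A. c a * G a $$ (i,j))"
  shows "cinner n y (mat_app n M y) = (\<Sum>a\<in>A. c a * cinner n y (mat_app n (G a) y))"
proof -
  have "cinner n y (mat_app n M y) = (\<Sum>i<n. \<Sum>j<n. \<Sum>a\<in>A. c a * (cnj (y i) * G a $$ (i,j) * y j))"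
    unfolding cinner_def mat_app_def using assms(2) by (simp add: sum_distrib_left sum_distrib_right mult_ac)
  also have "\<dots> = (\<Sum>a\<in>A. \<Sum>i<n. \<Sum>j<n. c a * (cnj (y i) * G a $$ (i,j) * y j))"
    by (subst sum.swap) (simp add: sum.swap[of _ A])
  also have "\<dots> = (\<Sum>a\<in>A. c a * cinner n y (mat_app n (G a) y))"
    unfolding cinner_def mat_app_def by (simp add: sum_distrib_left sum_distrib_right mult_ac)
  finally show ?thesis .
qed

lemma cinner_ptrace_B_cq_mat:
  "cinner nE y (mat_app nE (ptrace_B nB nE (cq_mat nB nE \<omega>)) y) = (\<Sum>b<nB. cinner nE y (mat_app nE (\<omega> b) y))"
  using cinner_mat_app_linear[of "{..<nB}" nE "ptrace_B nB nE (cq_mat nB nE \<omega>)" "\<lambda>_. 1" \<omega> y]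
  by (simp add: index_ptrace_B_cq_mat)

lemma cq_mat_block_psd:
  assumes psd: "psd_mat (nB * nE) (cq_mat nB nE \<omega>)" and b: "b < nB"
  shows "0 \<le> Re (cinner nE y (mat_app nE (\<omega> b) y))"
proof -
  define x where "x I = (if I div nE = b then y (I mod nE) else 0)" for I
  have "cinner nE (\<lambda>i. x (b' * nE + i)) (mat_app nE (\<omega> b') (\<lambda>i. x (b' * nE + i)))
      = (if b' = b then cinner nE y (mat_app nE (\<omega> b) y) else 0)" for b'
  proof (cases "b' = b")
    case True
    have "x (b * nE + i) = y i" if "i < nE" for i using that by (simp add: x_def)
    hence "mat_app nE (\<omega> b) (\<lambda>i. x (b * nE + i)) = mat_app nE (\<omega> b) y" by (intro mat_app_cong) auto
    thus ?thesis using True \<open>\<And>i. i < nE \<Longrightarrow> x (b * nE + i) = y i\<close> by simp (intro cinner_cong; simp)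
  next
    case False
    hence "cinner nE (\<lambda>i. x (b' * nE + i)) (mat_app nE (\<omega> b') (\<lambda>i. x (b' * nE + i)))
        = cinner nE (\<lambda>_. 0) (mat_app nE (\<omega> b') (\<lambda>i. x (b' * nE + i)))"
      by (intro cinner_cong) (auto simp: x_def)
    thus ?thesis using False by (simp add: cinner_def)
  qed
  hence "cinner (nB * nE) x (mat_app (nB * nE) (cq_mat nB nE \<omega>) x) = cinner nE y (mat_app nE (\<omega> b) y)"
    unfolding cinner_cq_mat using b by simp
  thus ?thesis using psd_mat_cinner_nonneg[OF psd, of x] by simp
qed

lemma cq_state_le_marginal:
  fixes \<rho> \<omega> :: "nat \<Rightarrow> _" and p :: "nat \<Rightarrow> real"
  assumes p: "\<forall>a<nA. 0 \<le> p a" and psd: "\<forall>a<nA. psd_mat (nB * nE) (\<rho> a)"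
    and cq: "\<forall>a<nA. \<rho> a = cq_mat nB nE (\<omega> a)" and a: "a < nA" and pa: "0 < p a"
  shows "loewner_le (nB * nE) (\<rho> a) (complex_of_real (1 / p a) \<cdot>\<^sub>m
    kron (1\<^sub>m nB) (mat nE nE (\<lambda>ij. \<Sum>a<nA. complex_of_real (p a) * ptrace_B nB nE (\<rho> a) $$ ij)))"
proof -
  define \<rho>E where "\<rho>E = mat nE nE (\<lambda>ij. \<Sum>a<nA. complex_of_real (p a) * ptrace_B nB nE (\<rho> a) $$ ij)"
  have Ec: "\<rho>E \<in> carrier_mat nE nE" unfolding \<rho>E_def by simp
  have Eh: "mat_adjoint \<rho>E = \<rho>E"
  proof (rule mat_adjoint_eqI[OF Ec])
    fix i j assume "i < nE" "j < nE"
    hence herm: "cnj (ptrace_B nB nE (\<rho> a') $$ (j,i)) = ptrace_B nB nE (\<rho> a') $$ (i,j)" if "a' < nA" for a'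
      using ptrace_B_hermitian[OF psd_mat_carrier psd_mat_hermitian] psd that by blast
    have "cnj (\<rho>E $$ (j,i)) = (\<Sum>a'<nA. complex_of_real (p a') * cnj (ptrace_B nB nE (\<rho> a') $$ (j,i)))"
      unfolding \<rho>E_def using \<open>i < nE\<close> \<open>j < nE\<close> by simp
    also have "\<dots> = \<rho>E $$ (i,j)"
      unfolding \<rho>E_def using herm \<open>i < nE\<close> \<open>j < nE\<close> by simp
    finally show "cnj (\<rho>E $$ (j,i)) = \<rho>E $$ (i,j)" .
  qed
  have qf_E: "Re (cinner nE y (mat_app nE \<rho>E y))
      = (\<Sum>a'<nA. p a' * (\<Sum>b<nB. Re (cinner nE y (mat_app nE (\<omega> a' b) y))))" for y
  proof -
    have "cinner nE y (mat_app nE \<rho>E y)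
        = (\<Sum>a'<nA. complex_of_real (p a') * cinner nE y (mat_app nE (ptrace_B nB nE (\<rho> a')) y))"
      by (rule cinner_mat_app_linear) (simp_all add: \<rho>E_def)
    also have "\<dots> = (\<Sum>a'<nA. complex_of_real (p a') * (\<Sum>b<nB. cinner nE y (mat_app nE (\<omega> a' b) y)))"
      using cq by (simp add: cinner_ptrace_B_cq_mat)
    finally show ?thesis by (simp add: Re_sum)
  qed
  have block_le: "Re (cinner nE y (mat_app nE (\<omega> a b) y)) \<le> 1 / p a * Re (cinner nE y (mat_app nE \<rho>E y))"
    if b: "b < nB" for b y
  proof -
    have block_psd: "0 \<le> Re (cinner nE y (mat_app nE (\<omega> a' b') y))" if "a' < nA" "b' < nB" for a' b'
      using cq_mat_block_psd[of nB nE "\<omega> a'" b' y] psd cq that by simp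
    have "p a * Re (cinner nE y (mat_app nE (\<omega> a b) y)) \<le> p a * (\<Sum>b'<nB. Re (cinner nE y (mat_app nE (\<omega> a b') y)))"
      using b block_psd a pa by (intro mult_left_mono member_le_sum) auto
    also have "\<dots> \<le> Re (cinner nE y (mat_app nE \<rho>E y))"
      unfolding qf_E using a p block_psd
      by (intro member_le_sum[where f = "\<lambda>a'. p a' * (\<Sum>b<nB. Re (cinner nE y (mat_app nE (\<omega> a' b) y)))", simplified])
         (auto intro!: mult_nonneg_nonneg sum_nonneg)
    finally show ?thesis using pa by (simp add: field_simps)
  qed
  have "Re (cinner (nB * nE) x (mat_app (nB * nE) (\<rho> a) x))
      \<le> 1 / p a * Re (cinner (nB * nE) x (mat_app (nB * nE) (kron (1\<^sub>m nB) \<rho>E) x))" for x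
    unfolding cq[rule_format, OF a] cinner_cq_mat cinner_kron_one[OF Ec] Re_sum sum_distrib_left
    using block_le by (intro sum_mono) auto
  thus ?thesis
    using loewner_le_smult_iff[OF psd[rule_format, OF a] kron_one_hermitian[OF Ec Eh]] unfolding \<rho>E_def by blast
qed

lemma divergence_bounds_of_loewner_le:
  assumes rho: "psd_mat n \<rho>" and le: "loewner_le n \<rho> (complex_of_real (1 / p) \<cdot>\<^sub>m \<sigma>)" and p: "0 < p" "p \<le> 1"
  shows "(\<forall>\<alpha>::real. \<alpha> \<ge> 1 \<longrightarrow> renyi_D n \<alpha> \<rho> \<sigma> \<noteq> \<infinity> \<and>
      2 powr ((\<alpha> - 1) * real_of_ereal (renyi_D n \<alpha> \<rho> \<sigma>)) \<le> p powr (1 - \<alpha>))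
    \<and> max_D n \<rho> \<sigma> \<le> ereal (- log 2 p)"
proof -
  have "(1 / p) powr (\<alpha> - 1) = p powr (1 - \<alpha>)" for \<alpha>
    using p by (simp add: powr_divide powr_minus_divide[symmetric])
  moreover have "1 \<le> 1 / p" using p by simp
  ultimately show ?thesis
    using renyi_D_le_of_loewner_le[OF rho le] max_D_le_of_loewner_le[OF le] p by (simp add: log_divide)
qed

theorem claimC14:
  fixes nA nB nE :: nat
    and p :: "nat \<Rightarrow> real"
    and rhoBE :: "nat \<Rightarrow> complex mat"
    and rhoE :: "complex mat"
  assumes p_nonneg: "\<forall>a<nA. p a \<ge> 0"
    and p_sum: "(\<Sum>a<nA. p a) = 1"
    and states: "\<forall>a<nA. density_mat (nB * nE) (rhoBE a)"
    and B_classical: "\<forall>a<nA. \<exists>\<omega>. (\<forall>b<nB. \<omega> b \<in> carrier_mat nE nE) \<and> rhoBE a = cq_mat nB nE \<omega>"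
    and rhoE_def: "rhoE = mat nE nE (\<lambda>ij. \<Sum>a<nA. complex_of_real (p a) * ptrace_B nB nE (rhoBE a) $$ ij)"
  shows "\<forall>a<nA. p a > 0 \<longrightarrow>
           (\<forall>\<alpha>::real. \<alpha> \<ge> 1 \<longrightarrow>
              renyi_D (nB * nE) \<alpha> (rhoBE a) (kron (1\<^sub>m nB) rhoE) \<noteq> \<infinity> \<and>
              2 powr ((\<alpha> - 1) * real_of_ereal (renyi_D (nB * nE) \<alpha> (rhoBE a) (kron (1\<^sub>m nB) rhoE)))
                \<le> p a powr (1 - \<alpha>))
           \<and> max_D (nB * nE) (rhoBE a) (kron (1\<^sub>m nB) rhoE) \<le> ereal (- log 2 (p a))"
proof (intro allI impI divergence_bounds_of_loewner_le)
  fix a assume a: "a < nA" and pa: "0 < p a"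
  have psd: "\<forall>a<nA. psd_mat (nB * nE) (rhoBE a)" using states unfolding density_mat_def by blast
  then show "psd_mat (nB * nE) (rhoBE a)" using a by blast
  obtain \<omega> where cq: "\<forall>a<nA. rhoBE a = cq_mat nB nE (\<omega> a)" using B_classical by metis
  show "loewner_le (nB * nE) (rhoBE a) (complex_of_real (1 / p a) \<cdot>\<^sub>m kron (1\<^sub>m nB) rhoE)"
    unfolding rhoE_def by (rule cq_state_le_marginal[OF p_nonneg psd cq a pa])
  show "0 < p a" by (rule pa)
  show "p a \<le> 1" using member_le_sum[of a "{..<nA}" p] a p_nonneg p_sum by auto
qed

end
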